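(* Let $\Omega_x\subset\mathbb{R}$ and $\Omega_y\subset\mathbb{R}$ be bounded domains and $\Omega=\Omega_x\times\Omega_y$. For any measurable functions $r:\Omega_x\to\mathbb{R}$ and $s:\Omega_y\to\mathbb{R}$ such that $r\otimes s\neq 0$, $$ r\otimes s\in H^1_0(\Omega)\iff r\in H^1_0(\Omega_x)\text{ and } s\in H^1_0(\Omega_y).$$
   Context: For functions $r$ on $\Omega_x$ and $s$ on $\Omega_y$, $r\otimes s$ denotes the function on $\Omega$ given by $(r\otimes s)(x,y)=r(x)s(y)$. *)

theory Defs
  imports "HOL-Analysis.Analysis"
begin

definition bounded_domain :: "'a::euclidean_space set \<Rightarrow> bool" where
  "bounded_domain U \<longleftrightarrow> open U \<and> connected U \<and> U \<noteq> {} \<and> bounded U"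

fun iter_pd :: "'a::euclidean_space list \<Rightarrow> ('a \<Rightarrow> real) \<Rightarrow> 'a \<Rightarrow> real" where
  "iter_pd [] f = f"
| "iter_pd (b # bs) f = (\<lambda>x. frechet_derivative (iter_pd bs f) (at x) b)"

definition smooth_fun :: "('a::euclidean_space \<Rightarrow> real) \<Rightarrow> bool" where
  "smooth_fun f \<longleftrightarrow> (\<forall>bs. set bs \<subseteq> Basis \<longrightarrow> (\<forall>x. iter_pd bs f differentiable at x))"

definition test_fun :: "'a::euclidean_space set \<Rightarrow> ('a \<Rightarrow> real) set" where
  "test_fun U = {\<phi>. smooth_fun \<phi> \<and> compact (closure {x. \<phi> x \<noteq> 0}) \<and> closure {x. \<phi> x \<noteq> 0} \<subseteq> U}"

definition pd :: "'a::euclidean_space \<Rightarrow> ('a \<Rightarrow> real) \<Rightarrow> 'a \<Rightarrow> real" where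
  "pd b f = (\<lambda>x. frechet_derivative f (at x) b)"

definition L2 :: "'a::euclidean_space set \<Rightarrow> ('a \<Rightarrow> real) \<Rightarrow> bool" where
  "L2 U f \<longleftrightarrow> f \<in> borel_measurable (lebesgue_on U) \<and> integrable (lebesgue_on U) (\<lambda>x. (f x)\<^sup>2)"

definition weak_pd :: "'a::euclidean_space set \<Rightarrow> 'a \<Rightarrow> ('a \<Rightarrow> real) \<Rightarrow> ('a \<Rightarrow> real) \<Rightarrow> bool" where
  "weak_pd U b u g \<longleftrightarrow> (\<forall>\<phi>\<in>test_fun U.
      integrable (lebesgue_on U) (\<lambda>x. u x * pd b \<phi> x) \<and>
      integrable (lebesgue_on U) (\<lambda>x. g x * \<phi> x) \<and>
      (\<integral>x. u x * pd b \<phi> x \<partial>lebesgue_on U) = - (\<integral>x. g x * \<phi> x \<partial>lebesgue_on U))"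

text \<open>H^1_0(U): the closure of C_c^infinity(U) in the H^1(U) norm; i.e. u is in H^1(U)
  (L2 with L2 weak gradient g) and some sequence of test functions converges to u in H^1.\<close>
definition H10 :: "'a::euclidean_space set \<Rightarrow> ('a \<Rightarrow> real) \<Rightarrow> bool" where
  "H10 U u \<longleftrightarrow> L2 U u \<and>
     (\<exists>g. (\<forall>b\<in>Basis. L2 U (g b) \<and> weak_pd U b u (g b)) \<and>
          (\<exists>\<phi>. (\<forall>n. \<phi> n \<in> test_fun U) \<and>
               (\<lambda>n. \<integral>x. (u x - \<phi> n x)\<^sup>2 \<partial>lebesgue_on U) \<longlonglongrightarrow> 0 \<and>
               (\<forall>b\<in>Basis. (\<lambda>n. \<integral>x. (g b x - pd b (\<phi> n) x)\<^sup>2 \<partial>lebesgue_on U) \<longlonglongrightarrow> 0)))"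

definition tensor :: "(real \<Rightarrow> real) \<Rightarrow> (real \<Rightarrow> real) \<Rightarrow> real \<times> real \<Rightarrow> real" where
  "tensor r s = (\<lambda>(x, y). r x * s y)"

end

theory Submission
  imports Defs
begin

text \<open>
  If test functions \<open>\<phi>\<^sub>n \<rightarrow> r\<close> in \<open>H\<^sup>1(\<Omega>\<^sub>x)\<close> and \<open>\<psi>\<^sub>n \<rightarrow> s\<close> in \<open>H\<^sup>1(\<Omega>\<^sub>y)\<close>, then the test functions
  \<open>\<phi>\<^sub>n \<otimes> \<psi>\<^sub>n\<close> converge to \<open>r \<otimes> s\<close> in \<open>H\<^sup>1(\<Omega>)\<close>: the squared \<open>L\<^sup>2\<close> norm of a tensor product is the
  product of the squared norms, and \<open>\<partial>\<^sub>x(\<phi> \<otimes> \<psi>) = \<phi>' \<otimes> \<psi>\<close>.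

  Conversely, if test functions \<open>\<Phi>\<^sub>n \<rightarrow> r \<otimes> s\<close> in \<open>H\<^sup>1(\<Omega>)\<close>, Tonelli's theorem and Fatou's lemma
  show that along a subsequence the restrictions \<open>\<Phi>\<^sub>n(\<cdot>, y)\<close> converge in \<open>H\<^sup>1(\<Omega>\<^sub>x)\<close> to
  \<open>s(y) r\<close> for almost every \<open>y\<close>; some such \<open>y\<close> has \<open>s(y) \<noteq> 0\<close> because \<open>r \<otimes> s \<noteq> 0\<close>, and
  dividing by \<open>s(y)\<close> shows \<open>r \<in> H\<^sup>1\<^sub>0(\<Omega>\<^sub>x)\<close>. In both directions the limit of the derivatives is
  identified as a weak derivative by integrating by parts against test functions.
\<close>

lemma borel_measurable_lebesgue_on:
  fixes f :: "'a::euclidean_space \<Rightarrow> real"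
  assumes "f \<in> borel_measurable borel"
  shows "f \<in> borel_measurable (lebesgue_on U)"
  using assms by (intro measurable_restrict_space1 measurable_completion) simp

lemma AE_lebesgue_on_iff:
  fixes U :: "'a::euclidean_space set"
  assumes "U \<in> sets borel"
  shows "(AE x in lebesgue_on U. P x) \<longleftrightarrow> (AE x in lborel. x \<in> U \<longrightarrow> P x)"
proof -
  have "(AE x in lebesgue_on U. P x) \<longleftrightarrow> (AE x in lebesgue. x \<in> U \<longrightarrow> P x)"
    using assms by (intro AE_restrict_space_iff) auto
  also have "\<dots> \<longleftrightarrow> (AE x in lborel. x \<in> U \<longrightarrow> P x)" by (rule AE_completion_iff)
  finally show ?thesis .
qed

lemma lebesgue_on_measurable_AE_eq_borel:
  fixes f :: "'a::euclidean_space \<Rightarrow> real"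
  assumes U: "U \<in> sets borel" and f: "f \<in> borel_measurable (lebesgue_on U)"
  obtains g where "g \<in> borel_measurable borel" "AE x in lebesgue_on U. f x = g x"
proof -
  have "(\<lambda>x. indicator U x *\<^sub>R f x) \<in> borel_measurable lebesgue"
    using f U by (subst (asm) borel_measurable_restrict_space_iff) auto
  then obtain g where g: "g \<in> borel_measurable lborel"
    and ae: "AE x in lborel. indicator U x *\<^sub>R f x = g x"
    using completion_ex_borel_measurable_real by blast
  have "AE x in lborel. x \<in> U \<longrightarrow> f x = g x" using ae by eventually_elim auto
  then show ?thesis using that g AE_lebesgue_on_iff[OF U] by simp
qed

lemma borel_measurable_lebesgue_on_AE_cong:
  fixes f g :: "'a::euclidean_space \<Rightarrow> real"
  assumes U: "U \<in> sets borel" and f: "f \<in> borel_measurable (lebesgue_on U)"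
    and ae: "AE x in lebesgue_on U. f x = g x"
  shows "g \<in> borel_measurable (lebesgue_on U)"
proof -
  have f': "(\<lambda>x. indicator U x *\<^sub>R f x) \<in> borel_measurable lebesgue"
    using f U by (subst (asm) borel_measurable_restrict_space_iff) auto
  have "AE x in lebesgue. indicator U x *\<^sub>R f x = indicator U x *\<^sub>R g x"
    using ae U by (subst (asm) AE_restrict_space_iff) (auto elim!: AE_mp simp: indicator_def)
  then have "(\<lambda>x. indicator U x *\<^sub>R g x) \<in> borel_measurable lebesgue"
    by (rule borel_measurable_AE[OF f'])
  then show ?thesis using U by (subst borel_measurable_restrict_space_iff) auto
qed

lemma integral_lebesgue_on_eq_lborel:
  fixes f :: "'a::euclidean_space \<Rightarrow> real"
  assumes U: "U \<in> sets borel" and f: "f \<in> borel_measurable borel"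
    and zero: "\<And>x. x \<notin> U \<Longrightarrow> f x = 0"
  shows "integral\<^sup>L (lebesgue_on U) f = integral\<^sup>L lborel f"
proof -
  have "integral\<^sup>L (lebesgue_on U) f = integral\<^sup>L lebesgue (\<lambda>x. indicator U x *\<^sub>R f x)"
    using U by (intro integral_restrict_space) auto
  also have "(\<lambda>x. indicator U x *\<^sub>R f x) = f"
  proof
    fix x show "indicator U x *\<^sub>R f x = f x" using zero[of x] by (cases "x \<in> U") auto
  qed
  also have "integral\<^sup>L lebesgue f = integral\<^sup>L lborel f"
    using f by (intro integral_completion) auto
  finally show ?thesis .
qed

lemma finite_measure_lebesgue_on_bounded:
  fixes U :: "'a::euclidean_space set"
  shows "U \<in> sets borel \<Longrightarrow> bounded U \<Longrightarrow> finite_measure (lebesgue_on U)"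
  by (simp add: bounded_set_imp_lmeasurable finite_measure_lebesgue_on)

lemma AE_fst_lborel:
  assumes "AE x in lborel. P x"
  shows "AE z in (lborel :: (real \<times> real) measure). P (fst z)"
proof -
  from assms obtain N where N: "N \<in> null_sets lborel" "{x. \<not> P x} \<subseteq> N"
    by (auto elim!: AE_E simp: null_sets_def)
  have "N \<times> UNIV \<in> null_sets (lborel \<Otimes>\<^sub>M lborel)"
    using N(1) by (auto simp: null_sets_def lborel.emeasure_pair_measure_Times)
  then have "N \<times> UNIV \<in> null_sets (lborel :: (real \<times> real) measure)" by (simp add: lborel_prod)
  moreover have "{z. \<not> P (fst z)} \<subseteq> N \<times> UNIV" using N(2) by auto
  ultimately show ?thesis by (intro AE_I') auto
qed

lemma AE_snd_lborel:
  assumes "AE y in lborel. P y"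
  shows "AE z in (lborel :: (real \<times> real) measure). P (snd z)"
proof -
  from assms obtain N where N: "N \<in> null_sets lborel" "{y. \<not> P y} \<subseteq> N"
    by (auto elim!: AE_E simp: null_sets_def)
  have "UNIV \<times> N \<in> null_sets (lborel \<Otimes>\<^sub>M lborel)"
    using N(1) by (auto simp: null_sets_def lborel.emeasure_pair_measure_Times)
  then have "UNIV \<times> N \<in> null_sets (lborel :: (real \<times> real) measure)" by (simp add: lborel_prod)
  moreover have "{z. \<not> P (snd z)} \<subseteq> UNIV \<times> N" using N(2) by auto
  ultimately show ?thesis by (intro AE_I') auto
qed

lemma borel_Times_real:
  "A \<in> sets borel \<Longrightarrow> B \<in> sets borel \<Longrightarrow> A \<times> B \<in> sets (borel :: (real \<times> real) measure)"
  by (metis borel_prod pair_measureI)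

lemma borel_measurable_tensor [measurable]:
  "f \<in> borel_measurable borel \<Longrightarrow> h \<in> borel_measurable borel \<Longrightarrow> tensor f h \<in> borel_measurable borel"
  unfolding tensor_def by (simp add: case_prod_beta' borel_prod[symmetric])

lemma AE_tensor_eq_0:
  assumes A: "A \<in> sets borel" and B: "B \<in> sets borel"
    and "(AE x in lborel. x \<in> A \<longrightarrow> r x = 0) \<or> (AE y in lborel. y \<in> B \<longrightarrow> s y = 0)"
  shows "AE z in lebesgue_on (A \<times> B). tensor r s z = 0"
  unfolding AE_lebesgue_on_iff[OF borel_Times_real[OF A B]] using assms(3)
proof
  assume "AE x in lborel. x \<in> A \<longrightarrow> r x = 0"
  from AE_fst_lborel[OF this] show "AE z in lborel. z \<in> A \<times> B \<longrightarrow> tensor r s z = 0"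
    by eventually_elim (auto simp: tensor_def)
next
  assume "AE y in lborel. y \<in> B \<longrightarrow> s y = 0"
  from AE_snd_lborel[OF this] show "AE z in lborel. z \<in> A \<times> B \<longrightarrow> tensor r s z = 0"
    by eventually_elim (auto simp: tensor_def)
qed

lemma AE_tensor_cong:
  assumes A: "A \<in> sets borel" and B: "B \<in> sets borel"
    and r: "AE x in lebesgue_on A. r x = r' x" and s: "AE y in lebesgue_on B. s y = s' y"
  shows "AE z in lebesgue_on (A \<times> B). tensor r s z = tensor r' s' z"
proof -
  have "AE x in lborel. x \<in> A \<longrightarrow> r x = r' x" using r AE_lebesgue_on_iff[OF A] by simp
  moreover have "AE y in lborel. y \<in> B \<longrightarrow> s y = s' y" using s AE_lebesgue_on_iff[OF B] by simp
  ultimately show ?thesis unfolding AE_lebesgue_on_iff[OF borel_Times_real[OF A B]]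
    using AE_fst_lborel AE_snd_lborel by (fastforce simp: tensor_def)
qed

section \<open>Derivatives along lines and of tensor products\<close>

lemma frechet_derivative_works_at:
  "f differentiable at x \<Longrightarrow> (f has_derivative frechet_derivative f (at x)) (at x)"
  using frechet_derivative_works by blast

lemma has_derivative_line_comp:
  fixes F :: "'a::euclidean_space \<Rightarrow> real"
  assumes "F differentiable at (p + t *\<^sub>R d)"
  shows "((\<lambda>t. c * F (p + t *\<^sub>R d)) has_derivative
          (\<lambda>h. c * frechet_derivative F (at (p + t *\<^sub>R d)) (h *\<^sub>R d))) (at t)"
proof -
  have "((\<lambda>t. p + t *\<^sub>R d) has_derivative (\<lambda>h. h *\<^sub>R d)) (at t)"
    by (auto intro!: derivative_eq_intros)
  from diff_chain_at[OF this frechet_derivative_works_at[OF assms]]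
  show ?thesis by (intro has_derivative_mult_right) (simp add: o_def)
qed

lemma pd_line_comp:
  fixes F :: "'a::euclidean_space \<Rightarrow> real"
  assumes "\<And>x. F differentiable at x"
  shows "pd 1 (\<lambda>t. c * F (p + t *\<^sub>R d)) = (\<lambda>t. c * pd d F (p + t *\<^sub>R d))"
proof
  fix t
  show "pd 1 (\<lambda>t. c * F (p + t *\<^sub>R d)) t = c * pd d F (p + t *\<^sub>R d)"
    using frechet_derivative_at[OF has_derivative_line_comp[where c=c and p=p and t=t and d=d, OF assms],
        symmetric]
    by (simp add: pd_def)
qed

lemma iter_pd_line_comp:
  fixes \<phi> :: "'a::euclidean_space \<Rightarrow> real"
  assumes "\<And>n x. iter_pd (replicate n d) \<phi> differentiable at x"
  shows "iter_pd (replicate n 1) (\<lambda>t. c * \<phi> (p + t *\<^sub>R d))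
           = (\<lambda>t. c * iter_pd (replicate n d) \<phi> (p + t *\<^sub>R d))"
proof (induction n)
  case (Suc n)
  have "iter_pd (replicate (Suc n) 1) (\<lambda>t. c * \<phi> (p + t *\<^sub>R d))
          = pd 1 (\<lambda>t. c * iter_pd (replicate n d) \<phi> (p + t *\<^sub>R d))"
    using Suc by (simp add: pd_def)
  also have "\<dots> = (\<lambda>t. c * iter_pd (replicate (Suc n) d) \<phi> (p + t *\<^sub>R d))"
    using pd_line_comp[OF assms] by (simp add: pd_def)
  finally show ?case .
qed simp

lemma replicate_if_Basis_real: "set bs \<subseteq> (Basis :: real set) \<Longrightarrow> bs = replicate (length bs) 1"
  by (induction bs) auto

lemma Basis_real_prod: "(Basis :: (real \<times> real) set) = {(1, 0), (0, 1)}"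
  by (auto simp: Basis_prod_def)

lemma smooth_fun_differentiable: "smooth_fun \<phi> \<Longrightarrow> \<phi> differentiable at x"
  unfolding smooth_fun_def by (drule spec[of _ "[]"]) simp

lemma smooth_fun_pd_differentiable:
  "smooth_fun \<phi> \<Longrightarrow> b \<in> Basis \<Longrightarrow> pd b \<phi> differentiable at x"
  unfolding smooth_fun_def pd_def by (drule spec[of _ "[b]"]) simp

lemma smooth_fun_iter_pd_replicate:
  "smooth_fun \<phi> \<Longrightarrow> d \<in> Basis \<Longrightarrow> iter_pd (replicate n d) \<phi> differentiable at x"
  unfolding smooth_fun_def by (auto simp: set_replicate_conv_if)

lemma smooth_fun_iter_pd_real:
  "smooth_fun (a :: real \<Rightarrow> real) \<Longrightarrow> iter_pd (replicate n 1) a differentiable at x"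
  by (rule smooth_fun_iter_pd_replicate) simp_all

lemma smooth_fun_line_comp:
  fixes \<phi> :: "'a::euclidean_space \<Rightarrow> real"
  assumes "smooth_fun \<phi>" "d \<in> Basis"
  shows "smooth_fun (\<lambda>t. c * \<phi> (p + t *\<^sub>R d))"
  unfolding smooth_fun_def
proof (intro allI impI)
  fix bs :: "real list" and x
  assume "set bs \<subseteq> Basis"
  then have bs: "bs = replicate (length bs) 1" by (rule replicate_if_Basis_real)
  note D = smooth_fun_iter_pd_replicate[OF assms]
  show "iter_pd bs (\<lambda>t. c * \<phi> (p + t *\<^sub>R d)) differentiable at x"
    by (subst bs, subst iter_pd_line_comp[OF D])
      (use has_derivative_line_comp[where d=d, OF D] in \<open>unfold differentiable_def, blast\<close>)
qed

lemma tensor_has_derivative: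
  assumes "a differentiable at x" "b differentiable at y"
  shows "(tensor a b has_derivative
     (\<lambda>z. frechet_derivative a (at x) (fst z) * b y + a x * frechet_derivative b (at y) (snd z)))
     (at (x, y))"
proof -
  have da: "((\<lambda>z. a (fst z)) has_derivative (\<lambda>z. frechet_derivative a (at x) (fst z))) (at (x, y))"
    using diff_chain_at[of fst fst "(x, y)" a, OF has_derivative_fst[OF has_derivative_ident]]
        frechet_derivative_works_at[OF assms(1)]
    by (simp add: o_def)
  have db: "((\<lambda>z. b (snd z)) has_derivative (\<lambda>z. frechet_derivative b (at y) (snd z))) (at (x, y))"
    using diff_chain_at[of snd snd "(x, y)" b, OF has_derivative_snd[OF has_derivative_ident]]
        frechet_derivative_works_at[OF assms(2)]
    by (simp add: o_def)
  have "tensor a b = (\<lambda>z. a (fst z) * b (snd z))" unfolding tensor_def by auto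
  then show ?thesis using has_derivative_mult[OF da db] by (simp add: algebra_simps)
qed

lemma iter_pd_tensor:
  assumes a: "smooth_fun a" and b: "smooth_fun b" and bs: "set bs \<subseteq> Basis"
  shows "iter_pd bs (tensor a b) =
    tensor (iter_pd (replicate (count_list bs (1, 0)) 1) a) (iter_pd (replicate (count_list bs (0, 1)) 1) b)"
  using bs
proof (induction bs)
  case (Cons e bs)
  let ?a = "iter_pd (replicate (count_list bs (1, 0)) 1) a"
  let ?b = "iter_pd (replicate (count_list bs (0, 1)) 1) b"
  have e: "e = (1, 0) \<or> e = (0, 1)" using Cons.prems Basis_real_prod by auto
  show ?case
  proof
    fix z :: "real \<times> real"
    obtain x y where z: "z = (x, y)" by (cases z)
    have da: "?a differentiable at x" and db: "?b differentiable at y"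
      using smooth_fun_iter_pd_real[OF a] smooth_fun_iter_pd_real[OF b] by auto
    have "iter_pd (e # bs) (tensor a b) z = frechet_derivative (tensor ?a ?b) (at (x, y)) e"
      using Cons z by simp
    also have "\<dots> = frechet_derivative ?a (at x) (fst e) * ?b y + ?a x * frechet_derivative ?b (at y) (snd e)"
      using frechet_derivative_at[OF tensor_has_derivative[OF da db], symmetric] by simp
    finally show "iter_pd (e # bs) (tensor a b) z =
        tensor (iter_pd (replicate (count_list (e # bs) (1, 0)) 1) a)
          (iter_pd (replicate (count_list (e # bs) (0, 1)) 1) b) z"
      using e z linear_0[OF has_derivative_linear[OF frechet_derivative_works_at[OF da]]]
        linear_0[OF has_derivative_linear[OF frechet_derivative_works_at[OF db]]]
      by (auto simp: tensor_def)
  qed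
qed simp

lemma smooth_fun_tensor:
  assumes a: "smooth_fun a" and b: "smooth_fun b"
  shows "smooth_fun (tensor a b)"
  unfolding smooth_fun_def
proof (intro allI impI)
  fix bs :: "(real \<times> real) list" and z :: "real \<times> real"
  assume bs: "set bs \<subseteq> Basis"
  obtain x y where z: "z = (x, y)" by (cases z)
  show "iter_pd bs (tensor a b) differentiable at z"
    unfolding iter_pd_tensor[OF a b bs] z
    using tensor_has_derivative[OF smooth_fun_iter_pd_real[OF a] smooth_fun_iter_pd_real[OF b]]
    unfolding differentiable_def by blast
qed

lemma pd_tensor:
  assumes a: "smooth_fun a" and b: "smooth_fun b"
  shows "pd (1, 0) (tensor a b) = tensor (pd 1 a) b" "pd (0, 1) (tensor a b) = tensor a (pd 1 b)"
  using iter_pd_tensor[OF a b, of "[(1, 0)]"] iter_pd_tensor[OF a b, of "[(0, 1)]"]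
  by (simp_all add: Basis_real_prod pd_def)

definition tsupport :: "('a::euclidean_space \<Rightarrow> real) \<Rightarrow> 'a set" where
  "tsupport \<phi> = closure {x. \<phi> x \<noteq> 0}"

lemma test_funD:
  assumes "\<phi> \<in> test_fun U"
  shows "smooth_fun \<phi>" "compact (tsupport \<phi>)" "tsupport \<phi> \<subseteq> U"
  using assms unfolding test_fun_def tsupport_def by auto

lemma not_in_tsupport: "x \<notin> tsupport \<phi> \<Longrightarrow> \<phi> x = 0"
  unfolding tsupport_def using closure_subset[of "{x. \<phi> x \<noteq> 0}"] by auto

lemma pd_eq_0_outside_closed:
  assumes K: "closed K" "\<And>x. x \<notin> K \<Longrightarrow> F x = 0" and x: "x \<notin> K"
  shows "pd b F x = 0"
proof -
  have "((\<lambda>_. 0) has_derivative (\<lambda>_. 0)) (at x)" by simp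
  then have "(F has_derivative (\<lambda>_. 0)) (at x)"
  proof (rule has_derivative_transform_within_open)
    show "open (- K)" using K(1) by (simp add: open_Compl)
  qed (use K x in auto)
  then have "frechet_derivative F (at x) = (\<lambda>_. 0)" by (rule frechet_derivative_at[symmetric])
  then show ?thesis unfolding pd_def by simp
qed

lemma pd_not_in_tsupport: "x \<notin> tsupport \<phi> \<Longrightarrow> pd b \<phi> x = 0"
  using pd_eq_0_outside_closed[of "tsupport \<phi>" \<phi>] not_in_tsupport unfolding tsupport_def by blast

lemma test_fun_eq_0_outside: "\<phi> \<in> test_fun U \<Longrightarrow> x \<notin> U \<Longrightarrow> \<phi> x = 0"
  using test_funD(3) not_in_tsupport by blast

lemma continuous_on_smooth_fun: "smooth_fun \<phi> \<Longrightarrow> continuous_on UNIV \<phi>"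
  by (intro continuous_at_imp_continuous_on ballI differentiable_imp_continuous_within
      smooth_fun_differentiable)

lemma continuous_on_pd_smooth_fun: "smooth_fun \<phi> \<Longrightarrow> b \<in> Basis \<Longrightarrow> continuous_on UNIV (pd b \<phi>)"
  by (intro continuous_at_imp_continuous_on ballI differentiable_imp_continuous_within
      smooth_fun_pd_differentiable)

lemma bounded_if_continuous_zero_outside_compact:
  fixes f :: "'a::euclidean_space \<Rightarrow> real"
  assumes "continuous_on UNIV f" "compact K" "\<And>x. x \<notin> K \<Longrightarrow> f x = 0"
  obtains C where "\<And>x. \<bar>f x\<bar> \<le> C"
proof -
  have "bounded (f ` K)"
    using assms(1,2) by (intro compact_imp_bounded compact_continuous_image) (auto intro: continuous_on_subset)
  then obtain C where C: "\<And>y. y \<in> f ` K \<Longrightarrow> norm y \<le> C" unfolding bounded_iff by blast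
  have "\<bar>f x\<bar> \<le> max C 0" for x using C[of "f x"] assms(3)[of x] by (cases "x \<in> K") auto
  then show ?thesis using that by blast
qed

lemma test_fun_bounded:
  assumes "\<phi> \<in> test_fun U"
  obtains C where "\<And>x. \<bar>\<phi> x\<bar> \<le> C"
  using bounded_if_continuous_zero_outside_compact[OF continuous_on_smooth_fun[OF test_funD(1)[OF assms]]
      test_funD(2)[OF assms] not_in_tsupport[of _ \<phi>]] that by blast

lemma test_fun_pd_bounded:
  assumes "\<phi> \<in> test_fun U" "b \<in> Basis"
  obtains C where "\<And>x. \<bar>pd b \<phi> x\<bar> \<le> C"
  using bounded_if_continuous_zero_outside_compact[OF continuous_on_pd_smooth_fun[OF test_funD(1)[OF assms(1)] assms(2)]
      test_funD(2)[OF assms(1)] pd_not_in_tsupport[of _ \<phi> b]] that by blast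

lemma borel_measurable_test_fun: "\<phi> \<in> test_fun U \<Longrightarrow> \<phi> \<in> borel_measurable borel"
  by (intro borel_measurable_continuous_onI continuous_on_smooth_fun test_funD(1))

lemma borel_measurable_pd_test_fun: "\<phi> \<in> test_fun U \<Longrightarrow> b \<in> Basis \<Longrightarrow> pd b \<phi> \<in> borel_measurable borel"
  by (intro borel_measurable_continuous_onI continuous_on_pd_smooth_fun test_funD(1))

lemma test_fun_iff_bounded_support:
  "\<phi> \<in> test_fun U \<longleftrightarrow> smooth_fun \<phi> \<and> bounded {x. \<phi> x \<noteq> 0} \<and> closure {x. \<phi> x \<noteq> 0} \<subseteq> U"
  unfolding test_fun_def mem_Collect_eq compact_closure ..

lemma tensor_test_fun:
  assumes a: "a \<in> test_fun A" and b: "b \<in> test_fun B"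
  shows "tensor a b \<in> test_fun (A \<times> B)"
proof -
  let ?K = "tsupport a \<times> tsupport b"
  have K: "compact ?K" using test_funD(2)[OF a] test_funD(2)[OF b] by (rule compact_Times)
  have sub: "{z. tensor a b z \<noteq> 0} \<subseteq> ?K"
    using not_in_tsupport[of _ a] not_in_tsupport[of _ b] unfolding tensor_def by fastforce
  then have "closure {z. tensor a b z \<noteq> 0} \<subseteq> ?K"
    using K by (intro closure_minimal) (auto intro: compact_imp_closed)
  also have "?K \<subseteq> A \<times> B" using test_funD(3)[OF a] test_funD(3)[OF b] by blast
  finally show ?thesis unfolding test_fun_iff_bounded_support
    using smooth_fun_tensor[OF test_funD(1)[OF a] test_funD(1)[OF b]]
      bounded_subset[OF compact_imp_bounded[OF K] sub] by blast
qed

lemma compact_line_preimage: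
  fixes K :: "'a::euclidean_space set"
  assumes K: "compact K" and d: "d \<in> Basis"
  shows "compact {t. p + t *\<^sub>R d \<in> K}"
proof -
  have "closed ((\<lambda>t. p + t *\<^sub>R d) -` K)"
    by (rule continuous_closed_vimage) (auto intro!: continuous_intros compact_imp_closed[OF K])
  moreover obtain R where R: "\<And>z. z \<in> K \<Longrightarrow> norm z \<le> R"
    using K compact_imp_bounded bounded_iff by metis
  have "\<bar>t\<bar> \<le> R + norm p" if "p + t *\<^sub>R d \<in> K" for t
  proof -
    have "\<bar>t\<bar> = norm ((p + t *\<^sub>R d) - p)" using d by simp
    also have "\<dots> \<le> norm (p + t *\<^sub>R d) + norm p" by (rule norm_triangle_ineq4)
    also have "\<dots> \<le> R + norm p" using R[OF that] by simp
    finally show ?thesis .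
  qed
  then have "bounded {t. p + t *\<^sub>R d \<in> K}" unfolding bounded_iff by auto
  ultimately show ?thesis by (simp add: vimage_def compact_eq_bounded_closed)
qed

lemma line_comp_test_fun:
  fixes \<phi> :: "'a::euclidean_space \<Rightarrow> real"
  assumes \<phi>: "\<phi> \<in> test_fun V" and d: "d \<in> Basis"
    and sub: "\<And>t. p + t *\<^sub>R d \<in> V \<Longrightarrow> t \<in> U"
  shows "(\<lambda>t. c * \<phi> (p + t *\<^sub>R d)) \<in> test_fun U"
proof -
  let ?S = "{t. p + t *\<^sub>R d \<in> tsupport \<phi>}"
  have S: "compact ?S" by (rule compact_line_preimage[OF test_funD(2)[OF \<phi>] d])
  have nz: "{t. c * \<phi> (p + t *\<^sub>R d) \<noteq> 0} \<subseteq> ?S" using not_in_tsupport[of _ \<phi>] by auto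
  then have "closure {t. c * \<phi> (p + t *\<^sub>R d) \<noteq> 0} \<subseteq> ?S"
    using S by (simp add: closure_minimal compact_imp_closed)
  moreover have "?S \<subseteq> U" using sub test_funD(3)[OF \<phi>] by blast
  ultimately show ?thesis unfolding test_fun_iff_bounded_support
    using smooth_fun_line_comp[OF test_funD(1)[OF \<phi>] d] bounded_subset[OF compact_imp_bounded[OF S] nz]
    by blast
qed

section \<open>Integration by parts for test functions\<close>

lemma integrable_continuous_zero_outside_compact:
  fixes h :: "'a::euclidean_space \<Rightarrow> real"
  assumes "continuous_on UNIV h" "compact K" "\<And>x. x \<notin> K \<Longrightarrow> h x = 0"
  shows "integrable lborel h"
proof -
  have "integrable lborel (\<lambda>x. indicator K x *\<^sub>R h x)"
    using assms by (intro borel_integrable_compact) (auto intro: continuous_on_subset)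
  also have "(\<lambda>x. indicator K x *\<^sub>R h x) = h"
  proof
    fix x show "indicator K x *\<^sub>R h x = h x" using assms(3)[of x] by (cases "x \<in> K") auto
  qed
  finally show ?thesis .
qed

lemma has_real_derivative_pd:
  fixes f :: "real \<Rightarrow> real"
  assumes "f differentiable at x"
  shows "(f has_real_derivative pd 1 f x) (at x)"
proof -
  have f': "(f has_derivative frechet_derivative f (at x)) (at x)"
    by (rule frechet_derivative_works_at[OF assms])
  have "frechet_derivative f (at x) h = pd 1 f x * h" for h
    using linear_scale[OF has_derivative_linear[OF f'], of h 1] unfolding pd_def by simp
  then have "frechet_derivative f (at x) = (*) (pd 1 f x)" by blast
  then show ?thesis using f' unfolding has_field_derivative_def by simp
qed

lemma integral_pd_real_eq_0:
  fixes f :: "real \<Rightarrow> real"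
  assumes f: "\<And>x. f differentiable at x" and f': "continuous_on UNIV (pd 1 f)"
    and K: "compact K" "\<And>x. x \<notin> K \<Longrightarrow> f x = 0"
  shows "integral\<^sup>L lborel (pd 1 f) = 0"
proof -
  obtain R where R: "\<And>x. x \<in> K \<Longrightarrow> \<bar>x\<bar> \<le> R"
    using compact_imp_bounded[OF K(1)] unfolding bounded_iff real_norm_def by blast
  define a where "a = - \<bar>R\<bar> - 1"
  define b where "b = \<bar>R\<bar> + 1"
  have ab: "a \<notin> K" "b \<notin> K" using R unfolding a_def b_def by force+
  have eq: "pd 1 f x * indicator {a..b} x = pd 1 f x" for x
  proof (cases "x \<in> K")
    case True
    then have "x \<in> {a..b}" using R[OF True] unfolding a_def b_def by (auto simp: abs_le_iff)
    then show ?thesis by simp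
  next
    case False
    then show ?thesis
      using pd_eq_0_outside_closed[OF compact_imp_closed[OF K(1)] K(2)] by simp
  qed
  have "integral\<^sup>L lborel (pd 1 f) = integral\<^sup>L lborel (\<lambda>x. pd 1 f x * indicator {a..b} x)"
    by (simp only: eq)
  also have "\<dots> = f b - f a"
    using continuous_on_eq_continuous_at[of UNIV] f' has_real_derivative_pd[OF f]
    by (intro integral_FTC_Icc_real) (auto simp: a_def b_def)
  finally show ?thesis using K(2)[OF ab(1)] K(2)[OF ab(2)] by simp
qed

lemma integral_pd_line_eq_0:
  fixes F :: "'a::euclidean_space \<Rightarrow> real"
  assumes F: "\<And>x. F differentiable at x" and d: "d \<in> Basis" and F': "continuous_on UNIV (pd d F)"
    and K: "compact K" "\<And>x. x \<notin> K \<Longrightarrow> F x = 0"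
  shows "integral\<^sup>L lborel (\<lambda>t. pd d F (p + t *\<^sub>R d)) = 0"
proof -
  let ?f = "\<lambda>t. 1 * F (p + t *\<^sub>R d)"
  have pd_f: "pd 1 ?f = (\<lambda>t. 1 * pd d F (p + t *\<^sub>R d))" by (rule pd_line_comp[OF F])
  have "integral\<^sup>L lborel (pd 1 ?f) = 0"
  proof (rule integral_pd_real_eq_0[OF _ _ compact_line_preimage[OF K(1) d, of p]])
    show "?f differentiable at t" for t
      using has_derivative_line_comp[OF F] unfolding differentiable_def by blast
    show "continuous_on UNIV (pd 1 ?f)" unfolding pd_f
      by (intro continuous_on_compose2[OF F'] continuous_intros) auto
  qed (use K(2) in simp)
  then show ?thesis unfolding pd_f by simp
qed

lemma integral_pd_real_prod_eq_0:
  fixes F :: "real \<times> real \<Rightarrow> real"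
  assumes F: "\<And>x. F differentiable at x" and b: "b \<in> Basis" and F': "continuous_on UNIV (pd b F)"
    and K: "compact K" "\<And>x. x \<notin> K \<Longrightarrow> F x = 0"
  shows "integral\<^sup>L lborel (pd b F) = 0"
proof -
  have "pd b F x = 0" if "x \<notin> K" for x
    using pd_eq_0_outside_closed[OF compact_imp_closed[OF K(1)] K(2) that] .
  then have int: "integrable (lborel \<Otimes>\<^sub>M lborel) (pd b F)"
    unfolding lborel_prod using integrable_continuous_zero_outside_compact[OF F' K(1)] by blast
  note line = integral_pd_line_eq_0[OF F b F' K]
  have "b = (1, 0) \<or> b = (0, 1)" using b Basis_real_prod by auto
  then show ?thesis
  proof
    assume b: "b = (1, 0)"
    have "integral\<^sup>L lborel (pd b F) = (\<integral>y. (\<integral>x. pd b F (x, y) \<partial>lborel) \<partial>lborel)"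
      using lborel_pair.integral_snd[of "\<lambda>x y. pd b F (x, y)"] int by (simp add: lborel_prod)
    also have "\<dots> = 0" using line[of "(0, _)"] b by simp
    finally show ?thesis .
  next
    assume b: "b = (0, 1)"
    have "integral\<^sup>L lborel (pd b F) = (\<integral>x. (\<integral>y. pd b F (x, y) \<partial>lborel) \<partial>lborel)"
      using lborel_pair.integral_fst'[OF int] by (simp add: lborel_prod)
    also have "\<dots> = 0" using line[of "(_, 0)"] b by simp
    finally show ?thesis .
  qed
qed

text \<open>
  This property holds for every basis vector of every Euclidean space, but it is only proved above
  for \<open>\<real>\<close> and \<open>\<real>\<^sup>2\<close>, the two spaces the theorem needs.
\<close>

definition pd_integral_vanishes :: "'a::euclidean_space \<Rightarrow> bool" where
  "pd_integral_vanishes b \<longleftrightarrow> (\<forall>F K. (\<forall>x. F differentiable at x) \<longrightarrow> continuous_on UNIV (pd b F) \<longrightarrow>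
      compact K \<longrightarrow> (\<forall>x. x \<notin> K \<longrightarrow> F x = 0) \<longrightarrow> integral\<^sup>L lborel (pd b F) = 0)"

lemma pd_integral_vanishes_real: "b \<in> Basis \<Longrightarrow> pd_integral_vanishes (b :: real)"
  unfolding pd_integral_vanishes_def using integral_pd_real_eq_0 by simp

lemma pd_integral_vanishes_real_prod: "b \<in> Basis \<Longrightarrow> pd_integral_vanishes (b :: real \<times> real)"
  unfolding pd_integral_vanishes_def using integral_pd_real_prod_eq_0 by blast

lemma test_fun_integration_by_parts:
  fixes \<phi> \<psi> :: "'a::euclidean_space \<Rightarrow> real"
  assumes U: "U \<in> sets borel" and \<phi>: "\<phi> \<in> test_fun U" and \<psi>: "\<psi> \<in> test_fun U"
    and b: "b \<in> Basis" "pd_integral_vanishes b"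
  shows "(\<integral>x. \<phi> x * pd b \<psi> x \<partial>lebesgue_on U) = - (\<integral>x. pd b \<phi> x * \<psi> x \<partial>lebesgue_on U)"
proof -
  have s\<phi>: "smooth_fun \<phi>" and s\<psi>: "smooth_fun \<psi>" using test_funD(1) \<phi> \<psi> by auto
  have F: "((\<lambda>x. \<phi> x * \<psi> x) has_derivative
      (\<lambda>h. \<phi> x * frechet_derivative \<psi> (at x) h + frechet_derivative \<phi> (at x) h * \<psi> x)) (at x)" for x
    using has_derivative_mult[OF frechet_derivative_works_at[OF smooth_fun_differentiable[OF s\<phi>]]
        frechet_derivative_works_at[OF smooth_fun_differentiable[OF s\<psi>]]] .
  have pdF: "pd b (\<lambda>x. \<phi> x * \<psi> x) = (\<lambda>x. \<phi> x * pd b \<psi> x + pd b \<phi> x * \<psi> x)"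
  proof
    fix x show "pd b (\<lambda>x. \<phi> x * \<psi> x) x = \<phi> x * pd b \<psi> x + pd b \<phi> x * \<psi> x"
      using frechet_derivative_at[OF F[of x], symmetric] unfolding pd_def by simp
  qed
  have c1: "continuous_on UNIV (\<lambda>x. \<phi> x * pd b \<psi> x)"
    and c2: "continuous_on UNIV (\<lambda>x. pd b \<phi> x * \<psi> x)"
    by (intro continuous_intros continuous_on_smooth_fun continuous_on_pd_smooth_fun s\<phi> s\<psi> b)+
  have K: "compact (tsupport \<phi>)" using test_funD(2)[OF \<phi>] .
  have i1: "integrable lborel (\<lambda>x. \<phi> x * pd b \<psi> x)"
    by (rule integrable_continuous_zero_outside_compact[OF c1 K]) (simp add: not_in_tsupport)
  have i2: "integrable lborel (\<lambda>x. pd b \<phi> x * \<psi> x)"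
    by (rule integrable_continuous_zero_outside_compact[OF c2 K]) (simp add: pd_not_in_tsupport)
  have "integral\<^sup>L lborel (pd b (\<lambda>x. \<phi> x * \<psi> x)) = 0"
  proof (rule b(2)[unfolded pd_integral_vanishes_def, rule_format])
    show "(\<lambda>x. \<phi> x * \<psi> x) differentiable at x" for x using F unfolding differentiable_def by blast
    show "continuous_on UNIV (pd b (\<lambda>x. \<phi> x * \<psi> x))" unfolding pdF by (intro continuous_intros c1 c2)
  qed (use K not_in_tsupport in auto)
  then have "integral\<^sup>L lborel (\<lambda>x. \<phi> x * pd b \<psi> x) = - integral\<^sup>L lborel (\<lambda>x. pd b \<phi> x * \<psi> x)"
    unfolding pdF using i1 i2 by simp
  moreover have "(\<integral>x. \<phi> x * pd b \<psi> x \<partial>lebesgue_on U) = integral\<^sup>L lborel (\<lambda>x. \<phi> x * pd b \<psi> x)"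
    using test_fun_eq_0_outside[OF \<phi>]
    by (intro integral_lebesgue_on_eq_lborel[OF U] borel_measurable_times
        borel_measurable_test_fun[OF \<phi>] borel_measurable_pd_test_fun[OF \<psi> b(1)]) simp
  moreover have "(\<integral>x. pd b \<phi> x * \<psi> x \<partial>lebesgue_on U) = integral\<^sup>L lborel (\<lambda>x. pd b \<phi> x * \<psi> x)"
    using test_fun_eq_0_outside[OF \<psi>]
    by (intro integral_lebesgue_on_eq_lborel[OF U] borel_measurable_times
        borel_measurable_test_fun[OF \<psi>] borel_measurable_pd_test_fun[OF \<phi> b(1)]) simp
  ultimately show ?thesis by simp
qed

section \<open>Weak derivatives of limits of test functions\<close>

lemma abs_le_add_square_div: "(e::real) > 0 \<Longrightarrow> \<bar>v\<bar> \<le> e + v\<^sup>2 / e"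
proof -
  assume e: "e > 0"
  have "0 \<le> (\<bar>v\<bar> - e)\<^sup>2" by simp
  then have "2 * e * \<bar>v\<bar> \<le> v\<^sup>2 + e\<^sup>2" by (simp add: power2_eq_square algebra_simps)
  then have "\<bar>v\<bar> \<le> (v\<^sup>2 + e\<^sup>2) / (2 * e)" using e by (simp add: field_simps)
  also have "\<dots> \<le> e + v\<^sup>2 / e" using e by (simp add: field_simps power2_eq_square)
  finally show ?thesis .
qed

lemma (in finite_measure) tendsto_integral_abs_if_square:
  fixes v :: "nat \<Rightarrow> 'a \<Rightarrow> real"
  assumes i: "\<And>n. integrable M (\<lambda>x. (v n x)\<^sup>2)"
    and lim: "(\<lambda>n. \<integral>x. (v n x)\<^sup>2 \<partial>M) \<longlonglongrightarrow> 0"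
  shows "(\<lambda>n. \<integral>x. \<bar>v n x\<bar> \<partial>M) \<longlonglongrightarrow> 0"
proof (rule LIMSEQ_I)
  fix r :: real assume r: "r > 0"
  define \<mu> where "\<mu> = measure M (space M)"
  define e where "e = r / (2 * (\<mu> + 1))"
  have "\<mu> \<ge> 0" unfolding \<mu>_def by simp
  then have e: "e > 0" and e_mu: "e * \<mu> < r / 2"
    using r unfolding e_def by (simp_all add: field_simps)
  obtain N where N: "\<And>n. n \<ge> N \<Longrightarrow> (\<integral>x. (v n x)\<^sup>2 \<partial>M) < e * (r / 2)"
    using order_tendstoD(2)[OF lim, of "e * (r / 2)"] e r unfolding eventually_sequentially by auto
  have "norm ((\<integral>x. \<bar>v n x\<bar> \<partial>M) - 0) < r" if n: "n \<ge> N" for n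
  proof -
    have "(\<integral>x. \<bar>v n x\<bar> \<partial>M) \<le> (\<integral>x. e + (v n x)\<^sup>2 / e \<partial>M)"
      using i abs_le_add_square_div[OF e] e by (intro integral_mono') auto
    also have "\<dots> = e * \<mu> + (\<integral>x. (v n x)\<^sup>2 \<partial>M) / e"
      using i by (simp add: \<mu>_def)
    also have "\<dots> < r"
    proof -
      have "(\<integral>x. (v n x)\<^sup>2 \<partial>M) / e < r / 2"
        using N[OF n] e by (simp add: divide_less_eq mult.commute)
      then show ?thesis using e_mu by linarith
    qed
    finally show ?thesis by simp
  qed
  then show "\<exists>N. \<forall>n\<ge>N. norm ((\<integral>x. \<bar>v n x\<bar> \<partial>M) - 0) < r" by blast
qed

lemma integrable_mult_bounded:
  fixes f h :: "'a \<Rightarrow> real"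
  assumes "integrable M f" "h \<in> borel_measurable M" "\<And>x. \<bar>h x\<bar> \<le> C"
  shows "integrable M (\<lambda>x. f x * h x)"
proof (rule Bochner_Integration.integrable_bound)
  show "integrable M (\<lambda>x. C * f x)" using assms(1) by simp
  show "AE x in M. norm (f x * h x) \<le> norm (C * f x)"
  proof (intro AE_I2)
    fix x
    have "\<bar>h x\<bar> \<le> \<bar>C\<bar>" using assms(3)[of x] by linarith
    from mult_left_mono[OF this abs_ge_zero[of "f x"]]
    show "norm (f x * h x) \<le> norm (C * f x)" by (simp add: abs_mult mult.commute)
  qed
qed (use assms in measurable)

lemma (in finite_measure) tendsto_integral_mult_bounded:
  fixes v :: "nat \<Rightarrow> 'a \<Rightarrow> real"
  assumes v: "\<And>n. v n \<in> borel_measurable M" "\<And>n. integrable M (\<lambda>x. (v n x)\<^sup>2)"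
    and lim: "(\<lambda>n. \<integral>x. (v n x)\<^sup>2 \<partial>M) \<longlonglongrightarrow> 0"
    and h: "h \<in> borel_measurable M" "\<And>x. \<bar>h x\<bar> \<le> C"
  shows "(\<lambda>n. \<integral>x. v n x * h x \<partial>M) \<longlonglongrightarrow> 0"
proof (rule Lim_null_comparison)
  have iv: "integrable M (v n)" for n using square_integrable_imp_integrable[OF v] .
  show "\<forall>\<^sub>F n in sequentially. norm (\<integral>x. v n x * h x \<partial>M) \<le> C * (\<integral>x. \<bar>v n x\<bar> \<partial>M)"
  proof (intro always_eventually allI)
    fix n
    have "norm (\<integral>x. v n x * h x \<partial>M) \<le> (\<integral>x. \<bar>v n x * h x\<bar> \<partial>M)"
      unfolding real_norm_def by (rule integral_abs_bound)
    also have "\<dots> \<le> (\<integral>x. C * \<bar>v n x\<bar> \<partial>M)"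
    proof (rule integral_mono)
      show "integrable M (\<lambda>x. \<bar>v n x * h x\<bar>)" using integrable_mult_bounded[OF iv h] by simp
      show "\<bar>v n x * h x\<bar> \<le> C * \<bar>v n x\<bar>" for x
        using h(2)[of x] by (simp add: abs_mult mult_right_mono mult.commute)
    qed (use iv in simp)
    finally show "norm (\<integral>x. v n x * h x \<partial>M) \<le> C * (\<integral>x. \<bar>v n x\<bar> \<partial>M)" by simp
  qed
  show "(\<lambda>n. C * (\<integral>x. \<bar>v n x\<bar> \<partial>M)) \<longlonglongrightarrow> 0"
    using tendsto_mult_right_zero[OF tendsto_integral_abs_if_square[OF v(2) lim]] .
qed

lemma (in finite_measure) integrable_square_diff_bounded:
  fixes u \<phi> :: "'a \<Rightarrow> real"
  assumes u: "u \<in> borel_measurable M" "integrable M (\<lambda>x. (u x)\<^sup>2)"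
    and \<phi>: "\<phi> \<in> borel_measurable M" "\<And>x. \<bar>\<phi> x\<bar> \<le> C"
  shows "integrable M (\<lambda>x. (u x - \<phi> x)\<^sup>2)"
proof -
  have "integrable M (\<lambda>x. u x * \<phi> x)"
    using integrable_mult_bounded[OF square_integrable_imp_integrable[OF u] \<phi>] .
  moreover have "integrable M (\<lambda>x. (\<phi> x)\<^sup>2)"
    using \<phi> by (intro integrable_const_bound[where B = "C\<^sup>2"])
      (auto simp: abs_le_square_iff[symmetric] intro: order_trans[OF _ abs_ge_self])
  ultimately have "integrable M (\<lambda>x. (u x)\<^sup>2 - 2 * (u x * \<phi> x) + (\<phi> x)\<^sup>2)"
    using u(2) by auto
  then show ?thesis by (simp add: power2_diff algebra_simps)
qed

lemma (in finite_measure) tendsto_integral_mult_if_L2_limit: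
  fixes u h :: "'a \<Rightarrow> real" and \<phi> :: "nat \<Rightarrow> 'a \<Rightarrow> real"
  assumes u: "u \<in> borel_measurable M" "integrable M (\<lambda>x. (u x)\<^sup>2)"
    and \<phi>: "\<And>n. \<phi> n \<in> borel_measurable M" "\<And>n. \<exists>C. \<forall>x. \<bar>\<phi> n x\<bar> \<le> C"
    and h: "h \<in> borel_measurable M" "\<And>x. \<bar>h x\<bar> \<le> C"
    and lim: "(\<lambda>n. \<integral>x. (u x - \<phi> n x)\<^sup>2 \<partial>M) \<longlonglongrightarrow> 0"
  shows "(\<lambda>n. \<integral>x. \<phi> n x * h x \<partial>M) \<longlonglongrightarrow> (\<integral>x. u x * h x \<partial>M)"
proof -
  have "integrable M (\<lambda>x. (u x - \<phi> n x)\<^sup>2)" for n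
    using \<phi>(2)[of n] integrable_square_diff_bounded[OF u \<phi>(1)] by blast
  then have "(\<lambda>n. \<integral>x. (u x - \<phi> n x) * h x \<partial>M) \<longlonglongrightarrow> 0"
    using u(1) \<phi>(1) lim h by (intro tendsto_integral_mult_bounded) auto
  moreover have "(\<integral>x. (u x - \<phi> n x) * h x \<partial>M) = (\<integral>x. u x * h x \<partial>M) - (\<integral>x. \<phi> n x * h x \<partial>M)" for n
  proof -
    obtain C' where "\<And>x. \<bar>\<phi> n x\<bar> \<le> C'" using \<phi>(2) by blast
    then have "integrable M (\<lambda>x. \<phi> n x * h x)"
      using \<phi>(1) by (intro integrable_mult_bounded[OF _ h] integrable_const_bound) auto
    moreover have "integrable M (\<lambda>x. u x * h x)"
      by (rule integrable_mult_bounded[OF square_integrable_imp_integrable[OF u] h])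
    ultimately show ?thesis by (simp add: left_diff_distrib)
  qed
  ultimately show ?thesis
    using tendsto_diff[OF tendsto_const[of "\<integral>x. u x * h x \<partial>M"]] by fastforce
qed

lemma weak_pd_if_test_fun_limit:
  fixes U :: "'a::euclidean_space set"
  assumes U: "U \<in> sets borel" "bounded U" and b: "b \<in> Basis" "pd_integral_vanishes b"
    and u: "L2 U u" and g: "L2 U g" and \<phi>: "\<And>n. \<phi> n \<in> test_fun U"
    and lim_u: "(\<lambda>n. \<integral>x. (u x - \<phi> n x)\<^sup>2 \<partial>lebesgue_on U) \<longlonglongrightarrow> 0"
    and lim_g: "(\<lambda>n. \<integral>x. (g x - pd b (\<phi> n) x)\<^sup>2 \<partial>lebesgue_on U) \<longlonglongrightarrow> 0"
  shows "weak_pd U b u g"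
  unfolding weak_pd_def
proof (intro ballI conjI)
  fix \<psi> assume \<psi>: "\<psi> \<in> test_fun U"
  let ?M = "lebesgue_on U"
  interpret finite_measure ?M using finite_measure_lebesgue_on_bounded[OF U] .
  have mu: "u \<in> borel_measurable ?M" "integrable ?M (\<lambda>x. (u x)\<^sup>2)"
    and mg: "g \<in> borel_measurable ?M" "integrable ?M (\<lambda>x. (g x)\<^sup>2)"
    using u g unfolding L2_def by auto
  obtain C where C: "\<And>x. \<bar>\<psi> x\<bar> \<le> C" using test_fun_bounded[OF \<psi>] by blast
  obtain C' where C': "\<And>x. \<bar>pd b \<psi> x\<bar> \<le> C'" using test_fun_pd_bounded[OF \<psi> b(1)] by blast
  have m\<psi>: "\<psi> \<in> borel_measurable ?M" "pd b \<psi> \<in> borel_measurable ?M"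
    using borel_measurable_lebesgue_on borel_measurable_test_fun[OF \<psi>]
      borel_measurable_pd_test_fun[OF \<psi> b(1)] by auto
  have m\<phi>: "\<phi> n \<in> borel_measurable ?M" "pd b (\<phi> n) \<in> borel_measurable ?M" for n
    using borel_measurable_lebesgue_on borel_measurable_test_fun[OF \<phi>]
      borel_measurable_pd_test_fun[OF \<phi> b(1)] by auto
  have bdd: "\<exists>C. \<forall>x. \<bar>\<phi> n x\<bar> \<le> C" "\<exists>C. \<forall>x. \<bar>pd b (\<phi> n) x\<bar> \<le> C" for n
    using test_fun_bounded[OF \<phi>] test_fun_pd_bounded[OF \<phi> b(1)] by meson+
  show "integrable ?M (\<lambda>x. u x * pd b \<psi> x)"
    by (rule integrable_mult_bounded[OF square_integrable_imp_integrable[OF mu] m\<psi>(2) C'])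
  show "integrable ?M (\<lambda>x. g x * \<psi> x)"
    by (rule integrable_mult_bounded[OF square_integrable_imp_integrable[OF mg] m\<psi>(1) C])
  have "(\<lambda>n. \<integral>x. \<phi> n x * pd b \<psi> x \<partial>?M) \<longlonglongrightarrow> (\<integral>x. u x * pd b \<psi> x \<partial>?M)"
    by (rule tendsto_integral_mult_if_L2_limit[OF mu m\<phi>(1) bdd(1) m\<psi>(2) C' lim_u])
  moreover have "(\<lambda>n. \<integral>x. pd b (\<phi> n) x * \<psi> x \<partial>?M) \<longlonglongrightarrow> (\<integral>x. g x * \<psi> x \<partial>?M)"
    by (rule tendsto_integral_mult_if_L2_limit[OF mg m\<phi>(2) bdd(2) m\<psi>(1) C lim_g])
  then have "(\<lambda>n. \<integral>x. \<phi> n x * pd b \<psi> x \<partial>?M) \<longlonglongrightarrow> - (\<integral>x. g x * \<psi> x \<partial>?M)"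
    unfolding test_fun_integration_by_parts[OF U(1) \<phi> \<psi> b] by (rule tendsto_minus)
  ultimately show "(\<integral>x. u x * pd b \<psi> x \<partial>?M) = - (\<integral>x. g x * \<psi> x \<partial>?M)"
    by (rule LIMSEQ_unique)
qed

section \<open>The squared \<open>L\<^sup>2\<close> norm as an extended real\<close>

text \<open>
  Unlike the Bochner integrals in \<open>L2\<close>, this is meaningful (possibly infinite) for every
  Borel function, so finiteness and convergence can be argued without integrability side conditions.
\<close>

definition L2_sqnorm :: "'a::euclidean_space set \<Rightarrow> ('a \<Rightarrow> real) \<Rightarrow> ennreal" where
  "L2_sqnorm U f = (\<integral>\<^sup>+x. ennreal ((f x)\<^sup>2) * indicator U x \<partial>lborel)"

lemma L2_sqnorm_lebesgue_on:
  assumes "U \<in> sets borel"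
  shows "L2_sqnorm U f = (\<integral>\<^sup>+x. ennreal ((f x)\<^sup>2) \<partial>lebesgue_on U)"
  using assms unfolding L2_sqnorm_def
  by (simp add: nn_integral_restrict_space nn_integral_completion)

lemma L2_iff_L2_sqnorm_finite:
  fixes f :: "'a::euclidean_space \<Rightarrow> real"
  assumes U: "U \<in> sets borel" and f: "f \<in> borel_measurable borel"
  shows "L2 U f \<longleftrightarrow> L2_sqnorm U f < \<infinity>"
  using borel_measurable_lebesgue_on[OF f]
  unfolding L2_def integrable_iff_bounded L2_sqnorm_lebesgue_on[OF U] by simp

lemma tendsto_integral_square_iff_L2_sqnorm:
  fixes f :: "nat \<Rightarrow> 'a::euclidean_space \<Rightarrow> real"
  assumes U: "U \<in> sets borel" and f: "\<And>n. f n \<in> borel_measurable borel"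
    and fin: "\<And>n. L2_sqnorm U (f n) < \<infinity>"
  shows "(\<lambda>n. \<integral>x. (f n x)\<^sup>2 \<partial>lebesgue_on U) \<longlonglongrightarrow> 0 \<longleftrightarrow> (\<lambda>n. L2_sqnorm U (f n)) \<longlonglongrightarrow> 0"
proof -
  have "L2_sqnorm U (f n) = ennreal (\<integral>x. (f n x)\<^sup>2 \<partial>lebesgue_on U)" for n
  proof -
    have "(\<integral>x. (f n x)\<^sup>2 \<partial>lebesgue_on U) = enn2real (L2_sqnorm U (f n))"
      unfolding L2_sqnorm_lebesgue_on[OF U] using borel_measurable_lebesgue_on[OF f]
      by (intro integral_eq_nn_integral) auto
    then show ?thesis using fin[of n] by (simp add: less_top)
  qed
  then show ?thesis using tendsto_ennreal_iff[of "\<lambda>n. \<integral>x. (f n x)\<^sup>2 \<partial>lebesgue_on U" _ 0] by simp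
qed

lemma L2_sqnorm_tensor:
  fixes f h :: "real \<Rightarrow> real"
  assumes [measurable]: "f \<in> borel_measurable borel" "h \<in> borel_measurable borel"
    "A \<in> sets borel" "B \<in> sets borel"
  shows "L2_sqnorm (A \<times> B) (tensor f h) = L2_sqnorm A f * L2_sqnorm B h"
proof -
  let ?a = "\<lambda>x. ennreal ((f x)\<^sup>2) * indicator A x" and ?b = "\<lambda>y. ennreal ((h y)\<^sup>2) * indicator B y"
  have "L2_sqnorm (A \<times> B) (tensor f h) = (\<integral>\<^sup>+z. ?a (fst z) * ?b (snd z) \<partial>(lborel \<Otimes>\<^sub>M lborel))"
    unfolding L2_sqnorm_def lborel_prod[symmetric]
    by (intro nn_integral_cong)
      (auto simp: tensor_def power_mult_distrib ennreal_mult indicator_times mult_ac split: prod.split)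
  also have "\<dots> = (\<integral>\<^sup>+x. \<integral>\<^sup>+y. ?a x * ?b y \<partial>lborel \<partial>lborel)"
    by (subst lborel.nn_integral_fst[symmetric]) simp_all
  also have "\<dots> = L2_sqnorm A f * L2_sqnorm B h"
    unfolding L2_sqnorm_def by (simp add: nn_integral_cmult nn_integral_multc)
  finally show ?thesis .
qed

lemma L2_sqnorm_add_le:
  fixes f g :: "'a::euclidean_space \<Rightarrow> real"
  assumes [measurable]: "f \<in> borel_measurable borel" "g \<in> borel_measurable borel" "U \<in> sets borel"
  shows "L2_sqnorm U (\<lambda>x. f x + g x) \<le> 2 * L2_sqnorm U f + 2 * L2_sqnorm U g"
proof -
  have "ennreal ((f x + g x)\<^sup>2) \<le> 2 * ennreal ((f x)\<^sup>2) + 2 * ennreal ((g x)\<^sup>2)" for x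
  proof -
    have "(f x + g x)\<^sup>2 \<le> 2 * (f x)\<^sup>2 + 2 * (g x)\<^sup>2"
      using zero_le_power2[of "f x - g x"] by (simp add: power2_eq_square algebra_simps)
    then have "ennreal ((f x + g x)\<^sup>2) \<le> ennreal (2 * (f x)\<^sup>2 + 2 * (g x)\<^sup>2)"
      by (rule ennreal_leI)
    then show ?thesis by (simp add: ennreal_plus[symmetric] ennreal_mult)
  qed
  then have "L2_sqnorm U (\<lambda>x. f x + g x) \<le>
      (\<integral>\<^sup>+x. 2 * (ennreal ((f x)\<^sup>2) * indicator U x) + 2 * (ennreal ((g x)\<^sup>2) * indicator U x) \<partial>lborel)"
    unfolding L2_sqnorm_def by (intro nn_integral_mono) (auto split: split_indicator)
  also have "\<dots> = 2 * L2_sqnorm U f + 2 * L2_sqnorm U g"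
    unfolding L2_sqnorm_def by (subst nn_integral_add) (auto simp: nn_integral_cmult)
  finally show ?thesis .
qed

lemma L2_sqnorm_bounded_finite:
  fixes f :: "'a::euclidean_space \<Rightarrow> real"
  assumes U: "U \<in> sets borel" "bounded U" and C: "\<And>x. \<bar>f x\<bar> \<le> C"
  shows "L2_sqnorm U f < \<infinity>"
proof -
  have "ennreal ((f x)\<^sup>2) \<le> ennreal (C\<^sup>2)" for x
    using C[of x] by (intro ennreal_leI) (simp add: abs_le_square_iff[symmetric])
  then have "L2_sqnorm U f \<le> (\<integral>\<^sup>+x. ennreal (C\<^sup>2) * indicator U x \<partial>lborel)"
    unfolding L2_sqnorm_def by (intro nn_integral_mono) (auto split: split_indicator)
  also have "\<dots> = ennreal (C\<^sup>2) * emeasure lborel U" using U(1) by (simp add: nn_integral_cmult_indicator)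
  also have "\<dots> < \<infinity>" using emeasure_bounded_finite[OF U(2)] by (simp add: ennreal_mult_less_top)
  finally show ?thesis .
qed

lemma L2_sqnorm_diff_finite:
  fixes f h :: "'a::euclidean_space \<Rightarrow> real"
  assumes [measurable]: "U \<in> sets borel" "f \<in> borel_measurable borel" "h \<in> borel_measurable borel"
    and U: "bounded U" and f: "L2_sqnorm U f < \<infinity>" and C: "\<And>x. \<bar>h x\<bar> \<le> C"
  shows "L2_sqnorm U (\<lambda>x. f x - h x) < \<infinity>"
proof -
  have "L2_sqnorm U (\<lambda>x. f x + - h x) \<le> 2 * L2_sqnorm U f + 2 * L2_sqnorm U (\<lambda>x. - h x)"
    by (rule L2_sqnorm_add_le) measurable
  also have "\<dots> < \<infinity>"
    using f L2_sqnorm_bounded_finite[OF _ U, of "\<lambda>x. - h x" C] C by (simp add: ennreal_mult_less_top)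
  finally show ?thesis by simp
qed

lemma tendsto_integral_square_diff_iff_L2_sqnorm:
  fixes f :: "'a::euclidean_space \<Rightarrow> real" and h :: "nat \<Rightarrow> 'a \<Rightarrow> real"
  assumes U: "U \<in> sets borel" "bounded U" and f: "f \<in> borel_measurable borel" "L2_sqnorm U f < \<infinity>"
    and h: "\<And>n. h n \<in> borel_measurable borel" "\<And>n. \<exists>C. \<forall>x. \<bar>h n x\<bar> \<le> C"
  shows "(\<lambda>n. \<integral>x. (f x - h n x)\<^sup>2 \<partial>lebesgue_on U) \<longlonglongrightarrow> 0 \<longleftrightarrow>
    (\<lambda>n. L2_sqnorm U (\<lambda>x. f x - h n x)) \<longlonglongrightarrow> 0"
proof (rule tendsto_integral_square_iff_L2_sqnorm[OF U(1)])
  show "L2_sqnorm U (\<lambda>x. f x - h n x) < \<infinity>" for n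
    using h(2)[of n] L2_sqnorm_diff_finite[OF U(1) f(1) h(1) U(2) f(2)] by blast
qed (intro borel_measurable_diff f(1) h(1))

lemma AE_eq_0_if_L2_sqnorm_eq_0:
  fixes f :: "'a::euclidean_space \<Rightarrow> real"
  assumes [measurable]: "U \<in> sets borel" "f \<in> borel_measurable borel" and "L2_sqnorm U f = 0"
  shows "AE x in lborel. x \<in> U \<longrightarrow> f x = 0"
proof -
  have "AE x in lborel. ennreal ((f x)\<^sup>2) * indicator U x = 0"
    using assms(3) unfolding L2_sqnorm_def by (subst (asm) nn_integral_0_iff_AE) measurable
  then show ?thesis by eventually_elim (auto simp: indicator_def)
qed

lemma L2_sqnorm_diff_commute: "L2_sqnorm U (\<lambda>x. f x - h x) = L2_sqnorm U (\<lambda>x. h x - f x)"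
  unfolding L2_sqnorm_def by (simp add: power2_commute)

lemma tendsto_L2_sqnorm_tensor_diff:
  fixes a b :: "real \<Rightarrow> real" and an bn :: "nat \<Rightarrow> real \<Rightarrow> real"
  assumes [measurable]: "A \<in> sets borel" "B \<in> sets borel"
    "a \<in> borel_measurable borel" "b \<in> borel_measurable borel"
    "\<And>n. an n \<in> borel_measurable borel" "\<And>n. bn n \<in> borel_measurable borel"
    and fin: "L2_sqnorm A a < \<infinity>" "L2_sqnorm B b < \<infinity>"
    and lim_a: "(\<lambda>n. L2_sqnorm A (\<lambda>x. an n x - a x)) \<longlonglongrightarrow> 0"
    and lim_b: "(\<lambda>n. L2_sqnorm B (\<lambda>y. bn n y - b y)) \<longlonglongrightarrow> 0"
  shows "(\<lambda>n. L2_sqnorm (A \<times> B) (\<lambda>z. tensor (an n) (bn n) z - tensor a b z)) \<longlonglongrightarrow> 0"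
proof (rule tendsto_sandwich[OF _ _ tendsto_const])
  let ?\<alpha> = "\<lambda>n. L2_sqnorm A (\<lambda>x. an n x - a x)" and ?\<beta> = "\<lambda>n. L2_sqnorm B (\<lambda>y. bn n y - b y)"
  let ?T = "\<lambda>n. 2 * (?\<alpha> n * (2 * ?\<beta> n + 2 * L2_sqnorm B b)) + 2 * (L2_sqnorm A a * ?\<beta> n)"
  show "\<forall>\<^sub>F n in sequentially. 0 \<le> L2_sqnorm (A \<times> B) (\<lambda>z. tensor (an n) (bn n) z - tensor a b z)"
    by simp
  have "L2_sqnorm (A \<times> B) (\<lambda>z. tensor (an n) (bn n) z - tensor a b z) \<le> ?T n" for n
  proof -
    have "(\<lambda>z. tensor (an n) (bn n) z - tensor a b z) =
        (\<lambda>z. tensor (\<lambda>x. an n x - a x) (bn n) z + tensor a (\<lambda>y. bn n y - b y) z)"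
      by (auto simp: tensor_def algebra_simps)
    then have "L2_sqnorm (A \<times> B) (\<lambda>z. tensor (an n) (bn n) z - tensor a b z) \<le>
        2 * L2_sqnorm (A \<times> B) (tensor (\<lambda>x. an n x - a x) (bn n))
          + 2 * L2_sqnorm (A \<times> B) (tensor a (\<lambda>y. bn n y - b y))"
      using borel_Times_real by (simp add: L2_sqnorm_add_le)
    also have "\<dots> = 2 * (?\<alpha> n * L2_sqnorm B (bn n)) + 2 * (L2_sqnorm A a * ?\<beta> n)"
      by (simp add: L2_sqnorm_tensor)
    also have "\<dots> \<le> ?T n"
    proof -
      have "L2_sqnorm B (\<lambda>y. (bn n y - b y) + b y) \<le> 2 * ?\<beta> n + 2 * L2_sqnorm B b"
        by (rule L2_sqnorm_add_le) measurable
      then show ?thesis by (intro add_mono mult_left_mono) auto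
    qed
    finally show ?thesis .
  qed
  then show "\<forall>\<^sub>F n in sequentially. L2_sqnorm (A \<times> B) (\<lambda>z. tensor (an n) (bn n) z - tensor a b z) \<le> ?T n"
    by (intro always_eventually allI)
  have "?T \<longlonglongrightarrow> 2 * (0 * (2 * 0 + 2 * L2_sqnorm B b)) + 2 * (L2_sqnorm A a * 0)"
    using fin by (intro tendsto_intros lim_a lim_b) (auto simp: ennreal_mult_eq_top_iff)
  then show "?T \<longlonglongrightarrow> 0" by simp
qed

lemma weak_pd_AE_cong:
  fixes u u' :: "'a::euclidean_space \<Rightarrow> real"
  assumes w: "weak_pd U b u g" and b: "b \<in> Basis" and u': "u' \<in> borel_measurable (lebesgue_on U)"
    and ae: "AE x in lebesgue_on U. u x = u' x"
  shows "weak_pd U b u' g"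
  unfolding weak_pd_def
proof (intro ballI conjI)
  fix \<psi> assume \<psi>: "\<psi> \<in> test_fun U"
  have w: "integrable (lebesgue_on U) (\<lambda>x. u x * pd b \<psi> x)"
    "integrable (lebesgue_on U) (\<lambda>x. g x * \<psi> x)"
    "(\<integral>x. u x * pd b \<psi> x \<partial>lebesgue_on U) = - (\<integral>x. g x * \<psi> x \<partial>lebesgue_on U)"
    using w \<psi> unfolding weak_pd_def by auto
  have m: "(\<lambda>x. u' x * pd b \<psi> x) \<in> borel_measurable (lebesgue_on U)"
    using u' borel_measurable_lebesgue_on[OF borel_measurable_pd_test_fun[OF \<psi> b]] by measurable
  have ae': "AE x in lebesgue_on U. u x * pd b \<psi> x = u' x * pd b \<psi> x" using ae by (auto elim: AE_mp)
  show "integrable (lebesgue_on U) (\<lambda>x. u' x * pd b \<psi> x)"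
    by (rule integrable_cong_AE_imp[OF w(1) m ae'])
  show "integrable (lebesgue_on U) (\<lambda>x. g x * \<psi> x)" by (rule w(2))
  have "(\<integral>x. u' x * pd b \<psi> x \<partial>lebesgue_on U) = (\<integral>x. u x * pd b \<psi> x \<partial>lebesgue_on U)"
    by (rule integral_cong_AE) (use m w(1) ae' in \<open>auto elim: AE_mp\<close>)
  then show "(\<integral>x. u' x * pd b \<psi> x \<partial>lebesgue_on U) = - (\<integral>x. g x * \<psi> x \<partial>lebesgue_on U)"
    using w(3) by simp
qed

lemma H10_imp_H10_AE_eq:
  fixes u u' :: "'a::euclidean_space \<Rightarrow> real"
  assumes U: "U \<in> sets borel" and ae: "AE x in lebesgue_on U. u x = u' x" and H: "H10 U u"
  shows "H10 U u'"
proof -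
  from H obtain g \<phi> where u: "L2 U u" and g: "\<forall>b\<in>Basis. L2 U (g b) \<and> weak_pd U b u (g b)"
    and \<phi>: "\<forall>n. \<phi> n \<in> test_fun U" "(\<lambda>n. \<integral>x. (u x - \<phi> n x)\<^sup>2 \<partial>lebesgue_on U) \<longlonglongrightarrow> 0"
      "\<forall>b\<in>Basis. (\<lambda>n. \<integral>x. (g b x - pd b (\<phi> n) x)\<^sup>2 \<partial>lebesgue_on U) \<longlonglongrightarrow> 0"
    unfolding H10_def by blast
  have mu: "u \<in> borel_measurable (lebesgue_on U)" using u unfolding L2_def by blast
  have mu': "u' \<in> borel_measurable (lebesgue_on U)"
    by (rule borel_measurable_lebesgue_on_AE_cong[OF U mu ae])
  have "integrable (lebesgue_on U) (\<lambda>x. (u' x)\<^sup>2)"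
    using u mu' ae unfolding L2_def by (auto elim: integrable_cong_AE_imp AE_mp)
  then have u': "L2 U u'" using mu' unfolding L2_def by blast
  have "(\<integral>x. (u' x - \<phi> n x)\<^sup>2 \<partial>lebesgue_on U) = (\<integral>x. (u x - \<phi> n x)\<^sup>2 \<partial>lebesgue_on U)" for n
  proof -
    have "\<phi> n \<in> borel_measurable (lebesgue_on U)"
      using borel_measurable_lebesgue_on[OF borel_measurable_test_fun] \<phi>(1) by blast
    then show ?thesis using mu mu' ae by (intro integral_cong_AE) (auto elim: AE_mp)
  qed
  then show ?thesis unfolding H10_def using u' g \<phi> weak_pd_AE_cong[OF _ _ mu' ae]
    by (intro conjI exI[of _ g] exI[of _ \<phi>]) auto
qed

lemma H10_cong_AE:
  fixes u u' :: "'a::euclidean_space \<Rightarrow> real"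
  assumes "U \<in> sets borel" and "AE x in lebesgue_on U. u x = u' x"
  shows "H10 U u \<longleftrightarrow> H10 U u'"
proof
  have "AE x in lebesgue_on U. u' x = u x" using assms(2) by (auto elim: AE_mp)
  then show "H10 U u' \<Longrightarrow> H10 U u" by (rule H10_imp_H10_AE_eq[OF assms(1)])
qed (rule H10_imp_H10_AE_eq[OF assms])

lemma L2_limit_AE_eq_borel:
  fixes U :: "'a::euclidean_space set" and g :: "'a \<Rightarrow> real" and h :: "nat \<Rightarrow> 'a \<Rightarrow> real"
  assumes U: "U \<in> sets borel" "bounded U" and g: "L2 U g"
    and h: "\<And>n. h n \<in> borel_measurable borel" "\<And>n. \<exists>C. \<forall>x. \<bar>h n x\<bar> \<le> C"
    and lim: "(\<lambda>n. \<integral>x. (g x - h n x)\<^sup>2 \<partial>lebesgue_on U) \<longlonglongrightarrow> 0"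
  obtains G where "G \<in> borel_measurable borel" "L2_sqnorm U G < \<infinity>"
    "(\<lambda>n. L2_sqnorm U (\<lambda>x. G x - h n x)) \<longlonglongrightarrow> 0"
proof -
  have mg: "g \<in> borel_measurable (lebesgue_on U)" using g unfolding L2_def by auto
  obtain G where G: "G \<in> borel_measurable borel" and ae: "AE x in lebesgue_on U. g x = G x"
    using lebesgue_on_measurable_AE_eq_borel[OF U(1) mg] .
  have mG: "G \<in> borel_measurable (lebesgue_on U)" by (rule borel_measurable_lebesgue_on[OF G])
  have "L2 U G"
    using g mG ae unfolding L2_def by (auto elim: integrable_cong_AE_imp AE_mp)
  then have fin: "L2_sqnorm U G < \<infinity>" using L2_iff_L2_sqnorm_finite[OF U(1) G] by simp
  have "(\<integral>x. (g x - h n x)\<^sup>2 \<partial>lebesgue_on U) = (\<integral>x. (G x - h n x)\<^sup>2 \<partial>lebesgue_on U)" for n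
    using mg mG borel_measurable_lebesgue_on[OF h(1)] ae by (intro integral_cong_AE) (auto elim: AE_mp)
  then have "(\<lambda>n. L2_sqnorm U (\<lambda>x. G x - h n x)) \<longlonglongrightarrow> 0"
    using lim tendsto_integral_square_diff_iff_L2_sqnorm[OF U G fin h] by simp
  then show ?thesis using that G fin by blast
qed

definition H1_approx :: "'a::euclidean_space set \<Rightarrow> ('a \<Rightarrow> real) \<Rightarrow> ('a \<Rightarrow> 'a \<Rightarrow> real) \<Rightarrow>
    (nat \<Rightarrow> 'a \<Rightarrow> real) \<Rightarrow> bool" where
  "H1_approx U u g \<phi> \<longleftrightarrow>
     (\<forall>b\<in>Basis. g b \<in> borel_measurable borel \<and> L2_sqnorm U (g b) < \<infinity>) \<and> (\<forall>n. \<phi> n \<in> test_fun U) \<and>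
     (\<lambda>n. L2_sqnorm U (\<lambda>x. u x - \<phi> n x)) \<longlonglongrightarrow> 0 \<and>
     (\<forall>b\<in>Basis. (\<lambda>n. L2_sqnorm U (\<lambda>x. g b x - pd b (\<phi> n) x)) \<longlonglongrightarrow> 0)"

lemma H1_approx_if_H10:
  fixes U :: "'a::euclidean_space set"
  assumes U: "U \<in> sets borel" "bounded U" and u: "u \<in> borel_measurable borel" and H: "H10 U u"
  obtains g \<phi> where "L2_sqnorm U u < \<infinity>" "H1_approx U u g \<phi>"
proof -
  obtain g \<phi> where u2: "L2 U u" and g: "\<forall>b\<in>Basis. L2 U (g b)" and \<phi>: "\<And>n. \<phi> n \<in> test_fun U"
    and lim_u: "(\<lambda>n. \<integral>x. (u x - \<phi> n x)\<^sup>2 \<partial>lebesgue_on U) \<longlonglongrightarrow> 0"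
    and lim_g: "\<forall>b\<in>Basis. (\<lambda>n. \<integral>x. (g b x - pd b (\<phi> n) x)\<^sup>2 \<partial>lebesgue_on U) \<longlonglongrightarrow> 0"
    using H unfolding H10_def by blast
  have fin: "L2_sqnorm U u < \<infinity>" using u2 L2_iff_L2_sqnorm_finite[OF U(1) u] by simp
  have "\<forall>b\<in>Basis. \<exists>G. G \<in> borel_measurable borel \<and> L2_sqnorm U G < \<infinity> \<and>
      (\<lambda>n. L2_sqnorm U (\<lambda>x. G x - pd b (\<phi> n) x)) \<longlonglongrightarrow> 0"
  proof
    fix b :: 'a assume b: "b \<in> Basis"
    have bdd: "\<exists>C. \<forall>x. \<bar>pd b (\<phi> n) x\<bar> \<le> C" for n by (rule test_fun_pd_bounded[OF \<phi> b]) blast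
    obtain G where "G \<in> borel_measurable borel" "L2_sqnorm U G < \<infinity>"
      "(\<lambda>n. L2_sqnorm U (\<lambda>x. G x - pd b (\<phi> n) x)) \<longlonglongrightarrow> 0"
      by (rule L2_limit_AE_eq_borel[OF U _ borel_measurable_pd_test_fun[OF \<phi> b] bdd, of "g b"])
        (use g lim_g b in auto)
    then show "\<exists>G. G \<in> borel_measurable borel \<and> L2_sqnorm U G < \<infinity> \<and>
        (\<lambda>n. L2_sqnorm U (\<lambda>x. G x - pd b (\<phi> n) x)) \<longlonglongrightarrow> 0"
      by blast
  qed
  then obtain G where "\<forall>b\<in>Basis. G b \<in> borel_measurable borel \<and> L2_sqnorm U (G b) < \<infinity> \<and>
      (\<lambda>n. L2_sqnorm U (\<lambda>x. G b x - pd b (\<phi> n) x)) \<longlonglongrightarrow> 0"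
    by (rule bchoice[elim_format]) blast
  moreover have "\<exists>C. \<forall>x. \<bar>\<phi> n x\<bar> \<le> C" for n by (rule test_fun_bounded[OF \<phi>]) blast
  then have "(\<lambda>n. L2_sqnorm U (\<lambda>x. u x - \<phi> n x)) \<longlonglongrightarrow> 0"
    using lim_u tendsto_integral_square_diff_iff_L2_sqnorm[OF U u fin borel_measurable_test_fun[OF \<phi>]]
    by simp
  ultimately show ?thesis using that fin \<phi> unfolding H1_approx_def by blast
qed

lemma H10_if_H1_approx:
  fixes U :: "'a::euclidean_space set"
  assumes U: "U \<in> sets borel" "bounded U" and u: "u \<in> borel_measurable borel"
    and vanish: "\<And>b :: 'a. b \<in> Basis \<Longrightarrow> pd_integral_vanishes b"
    and fin: "L2_sqnorm U u < \<infinity>" and approx: "H1_approx U u g \<phi>"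
  shows "H10 U u"
proof -
  have g: "\<And>b. b \<in> Basis \<Longrightarrow> g b \<in> borel_measurable borel \<and> L2_sqnorm U (g b) < \<infinity>"
    and \<phi>: "\<And>n. \<phi> n \<in> test_fun U" and lim_u: "(\<lambda>n. L2_sqnorm U (\<lambda>x. u x - \<phi> n x)) \<longlonglongrightarrow> 0"
    and lim_g: "\<And>b. b \<in> Basis \<Longrightarrow> (\<lambda>n. L2_sqnorm U (\<lambda>x. g b x - pd b (\<phi> n) x)) \<longlonglongrightarrow> 0"
    using approx unfolding H1_approx_def by auto
  have u2: "L2 U u" using L2_iff_L2_sqnorm_finite[OF U(1) u] fin by simp
  have "\<exists>C. \<forall>x. \<bar>\<phi> n x\<bar> \<le> C" for n by (rule test_fun_bounded[OF \<phi>]) blast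
  then have lim_u': "(\<lambda>n. \<integral>x. (u x - \<phi> n x)\<^sup>2 \<partial>lebesgue_on U) \<longlonglongrightarrow> 0"
    using lim_u tendsto_integral_square_diff_iff_L2_sqnorm[OF U u fin borel_measurable_test_fun[OF \<phi>]]
    by simp
  have g2: "L2 U (g b)" and lim_g': "(\<lambda>n. \<integral>x. (g b x - pd b (\<phi> n) x)\<^sup>2 \<partial>lebesgue_on U) \<longlonglongrightarrow> 0"
    if b: "b \<in> Basis" for b
  proof -
    show "L2 U (g b)" using g[OF b] L2_iff_L2_sqnorm_finite[OF U(1)] by blast
    have bdd: "\<exists>C. \<forall>x. \<bar>pd b (\<phi> n) x\<bar> \<le> C" for n by (rule test_fun_pd_bounded[OF \<phi> b]) blast
    show "(\<lambda>n. \<integral>x. (g b x - pd b (\<phi> n) x)\<^sup>2 \<partial>lebesgue_on U) \<longlonglongrightarrow> 0"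
      using lim_g[OF b] g[OF b] borel_measurable_pd_test_fun[OF \<phi> b]
        tendsto_integral_square_diff_iff_L2_sqnorm[where h="\<lambda>n. pd b (\<phi> n)", OF U, of "g b"] bdd
      by blast
  qed
  have "weak_pd U b u (g b)" if b: "b \<in> Basis" for b
    by (rule weak_pd_if_test_fun_limit[OF U b vanish[OF b] u2 g2[OF b] \<phi> lim_u' lim_g'[OF b]])
  then show "H10 U u" unfolding H10_def using u2 g2 \<phi> lim_u' lim_g' by blast
qed

section \<open>Slices of a tensor product\<close>

lemma borel_measurable_pair_lborel:
  "(F :: real \<times> real \<Rightarrow> 'b::topological_space) \<in> borel_measurable borel \<Longrightarrow>
    F \<in> borel_measurable (lborel \<Otimes>\<^sub>M lborel)"
  by (simp add: lborel_prod)

lemma nn_integral_Times_iterated_fst: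
  fixes F :: "real \<times> real \<Rightarrow> ennreal"
  assumes [measurable]: "F \<in> borel_measurable borel" and A[measurable]: "A \<in> sets borel"
    and B[measurable]: "B \<in> sets borel"
  shows "(\<integral>\<^sup>+z. F z * indicator (A \<times> B) z \<partial>lborel) =
    (\<integral>\<^sup>+y. (\<integral>\<^sup>+x. F (x, y) * indicator A x \<partial>lborel) * indicator B y \<partial>lborel)"
proof -
  have m: "(\<lambda>z. F z * indicator (A \<times> B) z) \<in> borel_measurable (lborel \<Otimes>\<^sub>M lborel)"
    by (intro borel_measurable_pair_lborel) (use borel_Times_real[OF A B] in measurable)
  have "(\<integral>\<^sup>+z. F z * indicator (A \<times> B) z \<partial>lborel) =
      (\<integral>\<^sup>+z. F z * indicator (A \<times> B) z \<partial>(lborel \<Otimes>\<^sub>M lborel))"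
    by (simp add: lborel_prod)
  also have "\<dots> =
      (\<integral>\<^sup>+y. (\<integral>\<^sup>+x. F (x, y) * indicator (A \<times> B) (x, y) \<partial>lborel) \<partial>lborel)"
    by (rule lborel_pair.nn_integral_snd[OF m, symmetric])
  also have "\<dots> = (\<integral>\<^sup>+y. (\<integral>\<^sup>+x. F (x, y) * indicator A x \<partial>lborel) * indicator B y \<partial>lborel)"
  proof (intro nn_integral_cong)
    fix y :: real
    have "(\<integral>\<^sup>+x. F (x, y) * indicator (A \<times> B) (x, y) \<partial>lborel) =
        (\<integral>\<^sup>+x. (F (x, y) * indicator A x) * indicator B y \<partial>lborel)"
      by (intro nn_integral_cong) (simp add: indicator_times mult_ac)
    also have "\<dots> = (\<integral>\<^sup>+x. F (x, y) * indicator A x \<partial>lborel) * indicator B y"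
      by (rule nn_integral_multc) measurable
    finally show "(\<integral>\<^sup>+x. F (x, y) * indicator (A \<times> B) (x, y) \<partial>lborel) =
        (\<integral>\<^sup>+x. F (x, y) * indicator A x \<partial>lborel) * indicator B y" .
  qed
  finally show ?thesis .
qed

lemma nn_integral_Times_iterated_snd:
  fixes F :: "real \<times> real \<Rightarrow> ennreal"
  assumes [measurable]: "F \<in> borel_measurable borel" and A[measurable]: "A \<in> sets borel"
    and B[measurable]: "B \<in> sets borel"
  shows "(\<integral>\<^sup>+z. F z * indicator (A \<times> B) z \<partial>lborel) =
    (\<integral>\<^sup>+x. (\<integral>\<^sup>+y. F (x, y) * indicator B y \<partial>lborel) * indicator A x \<partial>lborel)"
proof -
  have m: "(\<lambda>z. F z * indicator (A \<times> B) z) \<in> borel_measurable (lborel \<Otimes>\<^sub>M lborel)"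
    by (intro borel_measurable_pair_lborel) (use borel_Times_real[OF A B] in measurable)
  have "(\<integral>\<^sup>+z. F z * indicator (A \<times> B) z \<partial>lborel) =
      (\<integral>\<^sup>+z. F z * indicator (A \<times> B) z \<partial>(lborel \<Otimes>\<^sub>M lborel))"
    by (simp add: lborel_prod)
  also have "\<dots> =
      (\<integral>\<^sup>+x. (\<integral>\<^sup>+y. F (x, y) * indicator (A \<times> B) (x, y) \<partial>lborel) \<partial>lborel)"
    by (rule lborel.nn_integral_fst[OF m, symmetric])
  also have "\<dots> = (\<integral>\<^sup>+x. (\<integral>\<^sup>+y. F (x, y) * indicator B y \<partial>lborel) * indicator A x \<partial>lborel)"
  proof (intro nn_integral_cong)
    fix x :: real
    have "(\<integral>\<^sup>+y. F (x, y) * indicator (A \<times> B) (x, y) \<partial>lborel) =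
        (\<integral>\<^sup>+y. (F (x, y) * indicator B y) * indicator A x \<partial>lborel)"
      by (intro nn_integral_cong) (simp add: indicator_times mult_ac)
    also have "\<dots> = (\<integral>\<^sup>+y. F (x, y) * indicator B y \<partial>lborel) * indicator A x"
      by (rule nn_integral_multc) measurable
    finally show "(\<integral>\<^sup>+y. F (x, y) * indicator (A \<times> B) (x, y) \<partial>lborel) =
        (\<integral>\<^sup>+y. F (x, y) * indicator B y \<partial>lborel) * indicator A x" .
  qed
  finally show ?thesis .
qed

lemma borel_measurable_nn_integral_fst_slice:
  fixes F :: "real \<times> real \<Rightarrow> ennreal"
  assumes [measurable]: "F \<in> borel_measurable borel" "A \<in> sets borel"
  shows "(\<lambda>y. \<integral>\<^sup>+x. F (x, y) * indicator A x \<partial>lborel) \<in> borel_measurable borel"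
proof -
  have [measurable]: "F \<in> borel_measurable (lborel \<Otimes>\<^sub>M lborel)" by (rule borel_measurable_pair_lborel) simp
  have "(\<lambda>(y, x). F (x, y) * indicator A x) \<in> borel_measurable (lborel \<Otimes>\<^sub>M lborel)" by measurable
  from lborel.borel_measurable_nn_integral[OF this] show ?thesis by simp
qed

lemma borel_measurable_nn_integral_snd_slice:
  fixes F :: "real \<times> real \<Rightarrow> ennreal"
  assumes [measurable]: "F \<in> borel_measurable borel" "B \<in> sets borel"
  shows "(\<lambda>x. \<integral>\<^sup>+y. F (x, y) * indicator B y \<partial>lborel) \<in> borel_measurable borel"
proof -
  have [measurable]: "F \<in> borel_measurable (lborel \<Otimes>\<^sub>M lborel)" by (rule borel_measurable_pair_lborel) simp
  have "(\<lambda>(x, y). F (x, y) * indicator B y) \<in> borel_measurable (lborel \<Otimes>\<^sub>M lborel)" by measurable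
  from lborel.borel_measurable_nn_integral[OF this] show ?thesis by simp
qed

lemma AE_liminf_eq_0_if_nn_integral_tendsto_0:
  assumes "\<And>n. W n \<in> borel_measurable M" and "(\<lambda>n. \<integral>\<^sup>+x. W n x \<partial>M) \<longlonglongrightarrow> 0"
  shows "AE x in M. liminf (\<lambda>n. W n x) = 0"
proof -
  have "(\<integral>\<^sup>+x. liminf (\<lambda>n. W n x) \<partial>M) \<le> liminf (\<lambda>n. \<integral>\<^sup>+x. W n x \<partial>M)"
    using assms(1) by (rule nn_integral_liminf)
  also have "\<dots> = 0" using lim_imp_Liminf[OF _ assms(2)] by simp
  finally have "(\<integral>\<^sup>+x. liminf (\<lambda>n. W n x) \<partial>M) = 0" by simp
  then show ?thesis using assms(1) by (subst (asm) nn_integral_0_iff_AE) auto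
qed

lemma L2_sqnorm_scaled_line:
  fixes f :: "'a::euclidean_space \<Rightarrow> real"
  assumes [measurable]: "f \<in> borel_measurable borel" "A \<in> sets borel"
  shows "L2_sqnorm A (\<lambda>t. c * f (q + t *\<^sub>R d)) =
    ennreal (c\<^sup>2) * (\<integral>\<^sup>+t. ennreal ((f (q + t *\<^sub>R d))\<^sup>2) * indicator A t \<partial>lborel)"
proof -
  have "L2_sqnorm A (\<lambda>t. c * f (q + t *\<^sub>R d)) =
      (\<integral>\<^sup>+t. ennreal (c\<^sup>2) * (ennreal ((f (q + t *\<^sub>R d))\<^sup>2) * indicator A t) \<partial>lborel)"
    unfolding L2_sqnorm_def
    by (intro nn_integral_cong) (simp add: power_mult_distrib ennreal_mult mult.assoc)
  also have "\<dots> = ennreal (c\<^sup>2) * (\<integral>\<^sup>+t. ennreal ((f (q + t *\<^sub>R d))\<^sup>2) * indicator A t \<partial>lborel)"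
    by (rule nn_integral_cmult) measurable
  finally show ?thesis .
qed

lemma H1_approx_line_restriction:
  fixes \<Omega> :: "'a::euclidean_space set" and A :: "real set"
  assumes d: "d \<in> Basis" and A[measurable]: "A \<in> sets borel"
    and line_in_A: "\<And>t. q + t *\<^sub>R d \<in> \<Omega> \<Longrightarrow> t \<in> A"
    and u[measurable]: "u \<in> borel_measurable borel" and G[measurable]: "G \<in> borel_measurable borel"
    and \<Phi>: "\<And>n. \<Phi> n \<in> test_fun \<Omega>"
    and G_fin: "(\<integral>\<^sup>+t. ennreal ((G (q + t *\<^sub>R d))\<^sup>2) * indicator A t \<partial>lborel) < \<infinity>"
    and lim: "(\<lambda>n. \<integral>\<^sup>+t. (ennreal ((u (q + t *\<^sub>R d) - \<Phi> n (q + t *\<^sub>R d))\<^sup>2)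
        + ennreal ((G (q + t *\<^sub>R d) - pd d (\<Phi> n) (q + t *\<^sub>R d))\<^sup>2)) * indicator A t \<partial>lborel) \<longlonglongrightarrow> 0"
    (is "?E \<longlonglongrightarrow> 0")
  shows "H1_approx A (\<lambda>t. c * u (q + t *\<^sub>R d)) (\<lambda>_ t. c * G (q + t *\<^sub>R d)) (\<lambda>n t. c * \<Phi> n (q + t *\<^sub>R d))"
proof -
  have [measurable]: "\<Phi> n \<in> borel_measurable borel" "pd d (\<Phi> n) \<in> borel_measurable borel" for n
    using borel_measurable_test_fun[OF \<Phi>] borel_measurable_pd_test_fun[OF \<Phi> d] by auto
  have pd_line: "pd 1 (\<lambda>t. c * \<Phi> n (q + t *\<^sub>R d)) = (\<lambda>t. c * pd d (\<Phi> n) (q + t *\<^sub>R d))" for n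
    using pd_line_comp[OF smooth_fun_differentiable[OF test_funD(1)[OF \<Phi>]]] .
  have lim_c: "(\<lambda>n. ennreal (c\<^sup>2) * ?E n) \<longlonglongrightarrow> 0"
    using ennreal_tendsto_cmult[OF _ lim, of "ennreal (c\<^sup>2)"] by simp
  have "L2_sqnorm A (\<lambda>t. c * (\<lambda>z. u z - \<Phi> n z) (q + t *\<^sub>R d)) \<le> ennreal (c\<^sup>2) * ?E n"
    "L2_sqnorm A (\<lambda>t. c * (\<lambda>z. G z - pd d (\<Phi> n) z) (q + t *\<^sub>R d)) \<le> ennreal (c\<^sup>2) * ?E n" for n
    by (subst L2_sqnorm_scaled_line, measurable,
        intro mult_left_mono nn_integral_mono, auto split: split_indicator)+
  then have "L2_sqnorm A (\<lambda>t. c * u (q + t *\<^sub>R d) - c * \<Phi> n (q + t *\<^sub>R d)) \<le> ennreal (c\<^sup>2) * ?E n"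
    "L2_sqnorm A (\<lambda>t. c * G (q + t *\<^sub>R d) - pd 1 (\<lambda>t. c * \<Phi> n (q + t *\<^sub>R d)) t) \<le> ennreal (c\<^sup>2) * ?E n"
    for n by (simp_all add: pd_line right_diff_distrib)
  then have "(\<lambda>n. L2_sqnorm A (\<lambda>t. c * u (q + t *\<^sub>R d) - c * \<Phi> n (q + t *\<^sub>R d))) \<longlonglongrightarrow> 0"
    "(\<lambda>n. L2_sqnorm A (\<lambda>t. c * G (q + t *\<^sub>R d) - pd 1 (\<lambda>t. c * \<Phi> n (q + t *\<^sub>R d)) t)) \<longlonglongrightarrow> 0"
    by (auto intro!: tendsto_sandwich[OF _ _ tendsto_const lim_c])
  moreover have "L2_sqnorm A (\<lambda>t. c * G (q + t *\<^sub>R d)) < \<infinity>"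
    using G_fin unfolding L2_sqnorm_scaled_line[OF G A] by (simp add: ennreal_mult_less_top)
  moreover have "(\<lambda>t. c * \<Phi> n (q + t *\<^sub>R d)) \<in> test_fun A" for n
    by (rule line_comp_test_fun[OF \<Phi> d line_in_A])
  ultimately show ?thesis unfolding H1_approx_def by simp
qed

lemma obtain_point_subseq_tendsto_0:
  fixes W :: "nat \<Rightarrow> 'a \<Rightarrow> ennreal"
  assumes [measurable]: "\<And>n. W n \<in> borel_measurable M" "H \<in> borel_measurable M" "B \<in> sets M"
    and lim: "(\<lambda>n. \<integral>\<^sup>+y. W n y * indicator B y \<partial>M) \<longlonglongrightarrow> 0"
    and H_fin: "(\<integral>\<^sup>+y. H y * indicator B y \<partial>M) < \<infinity>"
    and s_nz: "\<not> (AE y in M. y \<in> B \<longrightarrow> s y = 0)"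
  obtains y \<sigma> where "s y \<noteq> 0" "H y < \<infinity>" "(\<lambda>n. W (\<sigma> n) y) \<longlonglongrightarrow> 0"
proof -
  have "AE y in M. liminf (\<lambda>n. W n y * indicator B y) = 0"
    by (rule AE_liminf_eq_0_if_nn_integral_tendsto_0[OF _ lim]) measurable
  moreover have "AE y in M. H y * indicator B y \<noteq> \<infinity>"
    using H_fin by (intro nn_integral_PInf_AE) auto
  ultimately have ae: "AE y in M. y \<in> B \<longrightarrow> liminf (\<lambda>n. W n y) = 0 \<and> H y < \<infinity>"
    by eventually_elim (auto simp: top.not_eq_extremum)
  have "\<exists>y. liminf (\<lambda>n. W n y) = 0 \<and> H y < \<infinity> \<and> s y \<noteq> 0"
  proof (rule ccontr)
    assume none: "\<nexists>y. liminf (\<lambda>n. W n y) = 0 \<and> H y < \<infinity> \<and> s y \<noteq> 0"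
    from ae have "AE y in M. y \<in> B \<longrightarrow> s y = 0" by eventually_elim (use none in auto)
    with s_nz show False ..
  qed
  then obtain y where y: "liminf (\<lambda>n. W n y) = 0" "H y < \<infinity>" "s y \<noteq> 0" by blast
  moreover obtain \<sigma> :: "nat \<Rightarrow> nat" where "(\<lambda>n. W (\<sigma> n) y) \<longlonglongrightarrow> 0"
    using liminf_subseq_lim[of "\<lambda>n. W n y"] y(1) by (auto simp: o_def)
  ultimately show ?thesis using that by blast
qed

text \<open>
  Tonelli turns the \<open>H\<^sup>1(\<Omega>)\<close> convergence of \<open>\<Phi>\<close> into the convergence of an integral over
  the lines through \<open>\<Omega>\<close> in direction \<open>d\<close>; by Fatou, along a subsequence \<open>\<Phi>\<close> converges on almost
  every line, in particular on one where the second factor \<open>s\<close> does not vanish.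
\<close>

lemma H10_factor_if_H1_approx_tensor:
  fixes \<Omega> :: "(real \<times> real) set" and A B :: "real set" and p :: "real \<Rightarrow> real \<times> real"
    and r s :: "real \<Rightarrow> real" and u :: "real \<times> real \<Rightarrow> real"
  assumes d: "d \<in> Basis" and \<Omega>[measurable]: "\<Omega> \<in> sets borel"
    and A[measurable]: "A \<in> sets borel" and A_bounded: "bounded A" and B[measurable]: "B \<in> sets borel"
    and tonelli: "\<And>F. F \<in> borel_measurable borel \<Longrightarrow> (\<integral>\<^sup>+z. F z * indicator \<Omega> z \<partial>lborel)
         = (\<integral>\<^sup>+y. (\<integral>\<^sup>+t. F (p y + t *\<^sub>R d) * indicator A t \<partial>lborel) * indicator B y \<partial>lborel)"
    and measurable_slice: "\<And>F. F \<in> borel_measurable borel \<Longrightarrow>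
         (\<lambda>y. \<integral>\<^sup>+t. F (p y + t *\<^sub>R d) * indicator A t \<partial>lborel) \<in> borel_measurable borel"
    and line_in_A: "\<And>y t. p y + t *\<^sub>R d \<in> \<Omega> \<Longrightarrow> t \<in> A"
    and u_line: "\<And>y t. u (p y + t *\<^sub>R d) = r t * s y"
    and r[measurable]: "r \<in> borel_measurable borel" and u[measurable]: "u \<in> borel_measurable borel"
    and r_fin: "L2_sqnorm A r < \<infinity>" and approx: "H1_approx \<Omega> u g \<Phi>"
    and s_nz: "\<not> (AE y in lborel. y \<in> B \<longrightarrow> s y = 0)"
  shows "H10 A r"
proof -
  have [measurable]: "g d \<in> borel_measurable borel" and g_fin: "L2_sqnorm \<Omega> (g d) < \<infinity>"
    and \<Phi>: "\<And>n. \<Phi> n \<in> test_fun \<Omega>"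
    and lim_u: "(\<lambda>n. L2_sqnorm \<Omega> (\<lambda>z. u z - \<Phi> n z)) \<longlonglongrightarrow> 0"
    and lim_g: "(\<lambda>n. L2_sqnorm \<Omega> (\<lambda>z. g d z - pd d (\<Phi> n) z)) \<longlonglongrightarrow> 0"
    using approx d unfolding H1_approx_def by auto
  have [measurable]: "\<Phi> n \<in> borel_measurable borel" "pd d (\<Phi> n) \<in> borel_measurable borel" for n
    using borel_measurable_test_fun[OF \<Phi>] borel_measurable_pd_test_fun[OF \<Phi> d] by auto
  define F where "F n z = ennreal ((u z - \<Phi> n z)\<^sup>2) + ennreal ((g d z - pd d (\<Phi> n) z)\<^sup>2)" for n z
  have F[measurable]: "F n \<in> borel_measurable borel" for n unfolding F_def by measurable
  have "(\<integral>\<^sup>+y. (\<integral>\<^sup>+t. F n (p y + t *\<^sub>R d) * indicator A t \<partial>lborel) * indicator B y \<partial>lborel) =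
      L2_sqnorm \<Omega> (\<lambda>z. u z - \<Phi> n z) + L2_sqnorm \<Omega> (\<lambda>z. g d z - pd d (\<Phi> n) z)" for n
  proof -
    have "(\<integral>\<^sup>+y. (\<integral>\<^sup>+t. F n (p y + t *\<^sub>R d) * indicator A t \<partial>lborel) * indicator B y \<partial>lborel) =
        (\<integral>\<^sup>+z. F n z * indicator \<Omega> z \<partial>lborel)"
      by (rule tonelli[OF F, symmetric])
    also have "\<dots> = L2_sqnorm \<Omega> (\<lambda>z. u z - \<Phi> n z) + L2_sqnorm \<Omega> (\<lambda>z. g d z - pd d (\<Phi> n) z)"
      unfolding L2_sqnorm_def F_def by (simp add: distrib_right nn_integral_add)
    finally show ?thesis .
  qed
  then have "(\<lambda>n. \<integral>\<^sup>+y. (\<integral>\<^sup>+t. F n (p y + t *\<^sub>R d) * indicator A t \<partial>lborel) * indicator B y \<partial>lborel)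
      \<longlonglongrightarrow> 0"
    using tendsto_add[OF lim_u lim_g] by simp
  moreover have "(\<integral>\<^sup>+y. (\<integral>\<^sup>+t. ennreal ((g d (p y + t *\<^sub>R d))\<^sup>2) * indicator A t \<partial>lborel) * indicator B y
      \<partial>lborel) < \<infinity>"
    using g_fin tonelli[of "\<lambda>z. ennreal ((g d z)\<^sup>2)"] unfolding L2_sqnorm_def by simp
  ultimately obtain y \<sigma> where y: "s y \<noteq> 0"
    "(\<integral>\<^sup>+t. ennreal ((g d (p y + t *\<^sub>R d))\<^sup>2) * indicator A t \<partial>lborel) < \<infinity>"
    "(\<lambda>n. \<integral>\<^sup>+t. F (\<sigma> n) (p y + t *\<^sub>R d) * indicator A t \<partial>lborel) \<longlonglongrightarrow> 0"
    using s_nz by (rule obtain_point_subseq_tendsto_0[rotated 3])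
      (auto intro: measurable_slice measurable_slice[of "\<lambda>z. ennreal ((g d z)\<^sup>2)", simplified])
  have "H1_approx A (\<lambda>t. 1 / s y * u (p y + t *\<^sub>R d)) (\<lambda>_ t. 1 / s y * g d (p y + t *\<^sub>R d))
      (\<lambda>n t. 1 / s y * \<Phi> (\<sigma> n) (p y + t *\<^sub>R d))"
    using y(2,3) \<Phi>[of "\<sigma> _"] unfolding F_def by (intro H1_approx_line_restriction[OF d A line_in_A u]) auto
  moreover have "(\<lambda>t. 1 / s y * u (p y + t *\<^sub>R d)) = r" using y(1) by (simp add: u_line)
  ultimately show ?thesis
    using H10_if_H1_approx[OF A A_bounded r pd_integral_vanishes_real r_fin] by simp
qed

lemma H10_factors_if_H10_tensor:
  fixes A B :: "real set" and r s :: "real \<Rightarrow> real"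
  assumes A[measurable]: "A \<in> sets borel" "bounded A" and B[measurable]: "B \<in> sets borel" "bounded B"
    and r[measurable]: "r \<in> borel_measurable borel" and s[measurable]: "s \<in> borel_measurable borel"
    and r_nz: "\<not> (AE x in lborel. x \<in> A \<longrightarrow> r x = 0)" and s_nz: "\<not> (AE y in lborel. y \<in> B \<longrightarrow> s y = 0)"
    and H: "H10 (A \<times> B) (tensor r s)"
  shows "H10 A r \<and> H10 B s"
proof -
  have \<Omega>[measurable]: "A \<times> B \<in> sets borel" by (rule borel_Times_real[OF A(1) B(1)])
  have u[measurable]: "tensor r s \<in> borel_measurable borel" by simp
  obtain g \<Phi> where u_fin: "L2_sqnorm (A \<times> B) (tensor r s) < \<infinity>" and approx: "H1_approx (A \<times> B) (tensor r s) g \<Phi>"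
    using H1_approx_if_H10[OF \<Omega> bounded_Times[OF A(2) B(2)] u H] .
  have "L2_sqnorm A r \<noteq> 0" "L2_sqnorm B s \<noteq> 0"
    using AE_eq_0_if_L2_sqnorm_eq_0 r_nz s_nz by (metis A(1) r, metis B(1) s)
  then have r_fin: "L2_sqnorm A r < \<infinity>" and s_fin: "L2_sqnorm B s < \<infinity>"
    using u_fin unfolding L2_sqnorm_tensor[OF r s A(1) B(1)]
    by (auto simp: ennreal_mult_less_top top.not_eq_extremum)
  have "H10 A r"
  proof (rule H10_factor_if_H1_approx_tensor[where p = "\<lambda>y. (0, y)" and d = "(1, 0)"])
    show "(\<integral>\<^sup>+z. F z * indicator (A \<times> B) z \<partial>lborel) =
        (\<integral>\<^sup>+y. (\<integral>\<^sup>+t. F ((0, y) + t *\<^sub>R (1, 0)) * indicator A t \<partial>lborel) * indicator B y \<partial>lborel)"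
      if "F \<in> borel_measurable borel" for F :: "real \<times> real \<Rightarrow> ennreal"
      using nn_integral_Times_iterated_fst[OF that A(1) B(1)] by simp
    show "(\<lambda>y. \<integral>\<^sup>+t. F ((0, y) + t *\<^sub>R (1, 0)) * indicator A t \<partial>lborel) \<in> borel_measurable borel"
      if "F \<in> borel_measurable borel" for F :: "real \<times> real \<Rightarrow> ennreal"
      using borel_measurable_nn_integral_fst_slice[OF that A(1)] by simp
  qed (use A B u r_fin approx s_nz in \<open>auto simp: Basis_real_prod tensor_def\<close>)
  moreover have "H10 B s"
  proof (rule H10_factor_if_H1_approx_tensor[where p = "\<lambda>x. (x, 0)" and d = "(0, 1)" and s = r])
    show "(\<integral>\<^sup>+z. F z * indicator (A \<times> B) z \<partial>lborel) =
        (\<integral>\<^sup>+x. (\<integral>\<^sup>+t. F ((x, 0) + t *\<^sub>R (0, 1)) * indicator B t \<partial>lborel) * indicator A x \<partial>lborel)"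
      if "F \<in> borel_measurable borel" for F :: "real \<times> real \<Rightarrow> ennreal"
      using nn_integral_Times_iterated_snd[OF that A(1) B(1)] by simp
    show "(\<lambda>x. \<integral>\<^sup>+t. F ((x, 0) + t *\<^sub>R (0, 1)) * indicator B t \<partial>lborel) \<in> borel_measurable borel"
      if "F \<in> borel_measurable borel" for F :: "real \<times> real \<Rightarrow> ennreal"
      using borel_measurable_nn_integral_snd_slice[OF that B(1)] by simp
  qed (use A B u s_fin approx r_nz in \<open>auto simp: Basis_real_prod tensor_def\<close>)
  ultimately show ?thesis ..
qed

section \<open>Tensor products of approximations\<close>

lemma H1_approx_tensor:
  fixes A B :: "real set" and r s :: "real \<Rightarrow> real"
  assumes [measurable]: "A \<in> sets borel" "B \<in> sets borel"
    "r \<in> borel_measurable borel" "s \<in> borel_measurable borel"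
    and r_fin: "L2_sqnorm A r < \<infinity>" and s_fin: "L2_sqnorm B s < \<infinity>"
    and approx_r: "H1_approx A r gr \<phi>" and approx_s: "H1_approx B s gs \<psi>"
  defines "g b \<equiv> if b = (1, 0) then tensor (gr 1) s else tensor r (gs 1)"
  shows "H1_approx (A \<times> B) (tensor r s) g (\<lambda>n. tensor (\<phi> n) (\<psi> n))"
proof -
  have [measurable]: "gr 1 \<in> borel_measurable borel" "gs 1 \<in> borel_measurable borel"
    and gr_fin: "L2_sqnorm A (gr 1) < \<infinity>" and gs_fin: "L2_sqnorm B (gs 1) < \<infinity>"
    and \<phi>: "\<And>n. \<phi> n \<in> test_fun A" and \<psi>: "\<And>n. \<psi> n \<in> test_fun B"
    and lim_r: "(\<lambda>n. L2_sqnorm A (\<lambda>x. \<phi> n x - r x)) \<longlonglongrightarrow> 0"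
    and lim_s: "(\<lambda>n. L2_sqnorm B (\<lambda>y. \<psi> n y - s y)) \<longlonglongrightarrow> 0"
    and lim_gr: "(\<lambda>n. L2_sqnorm A (\<lambda>x. pd 1 (\<phi> n) x - gr 1 x)) \<longlonglongrightarrow> 0"
    and lim_gs: "(\<lambda>n. L2_sqnorm B (\<lambda>y. pd 1 (\<psi> n) y - gs 1 y)) \<longlonglongrightarrow> 0"
    using approx_r approx_s unfolding H1_approx_def by (auto simp: L2_sqnorm_diff_commute)
  have [measurable]: "\<phi> n \<in> borel_measurable borel" "pd 1 (\<phi> n) \<in> borel_measurable borel"
    "\<psi> n \<in> borel_measurable borel" "pd 1 (\<psi> n) \<in> borel_measurable borel" for n
    using borel_measurable_test_fun[OF \<phi>] borel_measurable_pd_test_fun[OF \<phi>, of 1]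
      borel_measurable_test_fun[OF \<psi>] borel_measurable_pd_test_fun[OF \<psi>, of 1] by auto
  have pd_tensor_\<phi>\<psi>: "pd (1, 0) (tensor (\<phi> n) (\<psi> n)) = tensor (pd 1 (\<phi> n)) (\<psi> n)"
    "pd (0, 1) (tensor (\<phi> n) (\<psi> n)) = tensor (\<phi> n) (pd 1 (\<psi> n))" for n
    using pd_tensor[OF test_funD(1)[OF \<phi>] test_funD(1)[OF \<psi>]] by auto
  have "(\<lambda>n. L2_sqnorm (A \<times> B) (\<lambda>z. tensor (\<phi> n) (\<psi> n) z - tensor r s z)) \<longlonglongrightarrow> 0"
    by (rule tendsto_L2_sqnorm_tensor_diff[OF _ _ _ _ _ _ r_fin s_fin lim_r lim_s]) simp_all
  moreover have "(\<lambda>n. L2_sqnorm (A \<times> B) (\<lambda>z. pd b (tensor (\<phi> n) (\<psi> n)) z - g b z)) \<longlonglongrightarrow> 0"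
    if "b \<in> Basis" for b
  proof -
    have "b = (1, 0) \<or> b = (0, 1)" using that Basis_real_prod by auto
    then show ?thesis
    proof
      assume b: "b = (1, 0)"
      have g: "g (1, 0) = tensor (gr 1) s" by (simp add: g_def)
      show ?thesis unfolding b pd_tensor_\<phi>\<psi> g
        by (rule tendsto_L2_sqnorm_tensor_diff[OF _ _ _ _ _ _ gr_fin s_fin lim_gr lim_s]) simp_all
    next
      assume b: "b = (0, 1)"
      have g: "g (0, 1) = tensor r (gs 1)" by (simp add: g_def)
      show ?thesis unfolding b pd_tensor_\<phi>\<psi> g
        by (rule tendsto_L2_sqnorm_tensor_diff[OF _ _ _ _ _ _ r_fin gs_fin lim_r lim_gs]) simp_all
    qed
  qed
  moreover have "g b \<in> borel_measurable borel" "L2_sqnorm (A \<times> B) (g b) < \<infinity>" for b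
    using r_fin s_fin gr_fin gs_fin by (simp_all add: g_def L2_sqnorm_tensor ennreal_mult_less_top)
  ultimately show ?thesis
    unfolding H1_approx_def using tensor_test_fun[OF \<phi> \<psi>] by (simp add: L2_sqnorm_diff_commute)
qed

lemma H10_tensor_if_H10_factors:
  fixes A B :: "real set" and r s :: "real \<Rightarrow> real"
  assumes A[measurable]: "A \<in> sets borel" "bounded A" and B[measurable]: "B \<in> sets borel" "bounded B"
    and r[measurable]: "r \<in> borel_measurable borel" and s[measurable]: "s \<in> borel_measurable borel"
    and Hr: "H10 A r" and Hs: "H10 B s"
  shows "H10 (A \<times> B) (tensor r s)"
proof -
  obtain gr \<phi> where r_fin: "L2_sqnorm A r < \<infinity>" and approx_r: "H1_approx A r gr \<phi>"
    using H1_approx_if_H10[OF A r Hr] .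
  obtain gs \<psi> where s_fin: "L2_sqnorm B s < \<infinity>" and approx_s: "H1_approx B s gs \<psi>"
    using H1_approx_if_H10[OF B s Hs] .
  have "L2_sqnorm (A \<times> B) (tensor r s) < \<infinity>"
    using r_fin s_fin by (simp add: L2_sqnorm_tensor ennreal_mult_less_top)
  then show ?thesis
    using H1_approx_tensor[OF A(1) B(1) r s r_fin s_fin approx_r approx_s]
    by (intro H10_if_H1_approx[OF borel_Times_real[OF A(1) B(1)] bounded_Times[OF A(2) B(2)] _
          pd_integral_vanishes_real_prod]) simp_all
qed

lemma H10_tensor_iff_borel:
  fixes A B :: "real set" and r s :: "real \<Rightarrow> real"
  assumes A: "A \<in> sets borel" "bounded A" and B: "B \<in> sets borel" "bounded B"
    and r: "r \<in> borel_measurable borel" and s: "s \<in> borel_measurable borel"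
    and nz: "\<not> (AE z in lebesgue_on (A \<times> B). tensor r s z = 0)"
  shows "H10 (A \<times> B) (tensor r s) \<longleftrightarrow> H10 A r \<and> H10 B s"
proof -
  have "\<not> (AE x in lborel. x \<in> A \<longrightarrow> r x = 0)" "\<not> (AE y in lborel. y \<in> B \<longrightarrow> s y = 0)"
    using AE_tensor_eq_0[OF A(1) B(1)] nz by blast+
  then show ?thesis
    using H10_factors_if_H10_tensor[OF A B r s] H10_tensor_if_H10_factors[OF A B r s] by blast
qed

theorem lemma1:
  fixes \<Omega>x \<Omega>y :: "real set" and r s :: "real \<Rightarrow> real"
  assumes "bounded_domain \<Omega>x" and "bounded_domain \<Omega>y"
    and "r \<in> borel_measurable (lebesgue_on \<Omega>x)"
    and "s \<in> borel_measurable (lebesgue_on \<Omega>y)"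
    and "\<not> (AE z in lebesgue_on (\<Omega>x \<times> \<Omega>y). tensor r s z = 0)"
  shows "H10 (\<Omega>x \<times> \<Omega>y) (tensor r s) \<longleftrightarrow> H10 \<Omega>x r \<and> H10 \<Omega>y s"
proof -
  have A: "\<Omega>x \<in> sets borel" "bounded \<Omega>x" and B: "\<Omega>y \<in> sets borel" "bounded \<Omega>y"
    using assms(1,2) unfolding bounded_domain_def by auto
  obtain r' where r': "r' \<in> borel_measurable borel" and ae_r: "AE x in lebesgue_on \<Omega>x. r x = r' x"
    using lebesgue_on_measurable_AE_eq_borel[OF A(1) assms(3)] .
  obtain s' where s': "s' \<in> borel_measurable borel" and ae_s: "AE y in lebesgue_on \<Omega>y. s y = s' y"
    using lebesgue_on_measurable_AE_eq_borel[OF B(1) assms(4)] .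
  have ae: "AE z in lebesgue_on (\<Omega>x \<times> \<Omega>y). tensor r s z = tensor r' s' z"
    by (rule AE_tensor_cong[OF A(1) B(1) ae_r ae_s])
  have "\<not> (AE z in lebesgue_on (\<Omega>x \<times> \<Omega>y). tensor r' s' z = 0)"
  proof
    assume "AE z in lebesgue_on (\<Omega>x \<times> \<Omega>y). tensor r' s' z = 0"
    with ae have "AE z in lebesgue_on (\<Omega>x \<times> \<Omega>y). tensor r s z = 0" by eventually_elim simp
    with assms(5) show False ..
  qed
  then show ?thesis
    using H10_tensor_iff_borel[OF A B r' s'] H10_cong_AE[OF borel_Times_real[OF A(1) B(1)] ae]
      H10_cong_AE[OF A(1) ae_r] H10_cong_AE[OF B(1) ae_s] by simp
qed

end
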